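(* Let $\lambda,\lambda_1,\sigma,\sigma_1\in\mathbb{C}^*$ and $\eta,\eta_1\in\mathbb{C}$, and let $R$ and $S$ be irreducible restricted $\mathcal{G}$-modules. Then: (1) $\Omega(\lambda,\eta,\sigma,0)\otimes R\cong\Omega(\lambda_1,\eta_1,\sigma_1,0)\otimes S$ as $\mathcal{G}$-modules if and only if $\lambda=\lambda_1$, $\eta=\eta_1$, $\sigma=\sigma_1$ and $R\cong S$; (2) $\Omega(\lambda,\eta,0,\sigma)\otimes R\cong\Omega(\lambda_1,\eta_1,0,\sigma_1)\otimes S$ if and only if $\lambda=\lambda_1$, $\eta=\eta_1$, $\sigma=\sigma_1$ and $R\cong S$; (3) $\Omega(\lambda,\eta,\sigma,0)\otimes R$ and $\Omega(\lambda_1,\eta_1,0,\sigma_1)\otimes S$ are not isomorphic.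
   Context: $\mathcal{G}$ is the complex Lie algebra with basis $\{L_n,H_n,I_n,J_n,\mathbf{c}_1,\mathbf{c}_2,\mathbf{c}_3: n\in\mathbb{Z}\}$ whose brackets of basis elements are $[L_m,L_n]=(n-m)L_{m+n}+\frac{m^3-m}{12}\delta_{m+n,0}\mathbf{c}_1$, $[L_m,H_n]=nH_{m+n}+m^2\delta_{m+n,0}\mathbf{c}_2$, $[H_m,H_n]=m\delta_{m+n,0}\mathbf{c}_3$, $[L_m,I_n]=(n-m)I_{m+n}$, $[L_m,J_n]=(n-m)J_{m+n}$, $[H_m,I_n]=I_{m+n}$, $[H_m,J_n]=-J_{m+n}$ (and antisymmetric counterparts), all other brackets of basis elements zero. $\mathcal{G}=\bigoplus_{i\in\mathbb{Z}}\mathcal{G}^i$ is $\mathbb{Z}$-graded with $\mathcal{G}^i$ spanned by $L_i,H_i,I_i,J_i$ (and also $\mathbf{c}_1,\mathbf{c}_2,\mathbf{c}_3$ when $i=0$). A $\mathcal{G}$-module $R$ is restricted if for every $v\in R$ there is $N\in\mathbb{N}$ with $\mathcal{G}^iv=0$ for all $i>N$. For $\lambda\in\mathbb{C}^*,\eta\in\mathbb{C}$, $\sigma\in\mathbb{C}^*$: $\Omega(\lambda,\eta,\sigma,0)$ is $\mathbb{C}[X,Y]$ with $L_mf(X,Y)=\lambda^mf(X,Y-m)(Y-mX+m\eta)$, $H_mf=\lambda^mXf(X,Y-m)$, $I_mf=\lambda^m\sigma f(X-1,Y-m)$, and $J_m,\mathbf{c}_1,\mathbf{c}_2,\mathbf{c}_3$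 acting as $0$; $\Omega(\lambda,\eta,0,\sigma)$ is $\mathbb{C}[X,Y]$ with $L_mf=\lambda^mf(X,Y-m)(Y+mX+m\eta)$, $H_mf=\lambda^mXf(X,Y-m)$, $J_mf=\lambda^m\sigma f(X+1,Y-m)$, and $I_m,\mathbf{c}_1,\mathbf{c}_2,\mathbf{c}_3$ acting as $0$ ($m\in\mathbb{Z}$). Tensor products carry the action $x(u\otimes v)=xu\otimes v+u\otimes xv$. *)

theory Defs
  imports Complex_Main "HOL-Library.Function_Algebras"
begin

datatype gbasis = L int | H int | I int | J int | C1 | C2 | C3

fun brk :: "gbasis \<Rightarrow> gbasis \<Rightarrow> (complex \<times> gbasis) list" where
  "brk (L m) (L n) = [(of_int (n - m), L (m + n))]
      @ (if m + n = 0 then [((of_int m ^ 3 - of_int m) / 12, C1)] else [])"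
| "brk (L m) (H n) = [(of_int n, H (m + n))]
      @ (if m + n = 0 then [(of_int m ^ 2, C2)] else [])"
| "brk (H n) (L m) = [(- of_int n, H (m + n))]
      @ (if m + n = 0 then [(- (of_int m ^ 2), C2)] else [])"
| "brk (H m) (H n) = (if m + n = 0 then [(of_int m, C3)] else [])"
| "brk (L m) (I n) = [(of_int (n - m), I (m + n))]"
| "brk (I n) (L m) = [(- of_int (n - m), I (m + n))]"
| "brk (L m) (J n) = [(of_int (n - m), J (m + n))]"
| "brk (J n) (L m) = [(- of_int (n - m), J (m + n))]"
| "brk (H m) (I n) = [(1, I (m + n))]"
| "brk (I n) (H m) = [(-1, I (m + n))]"
| "brk (H m) (J n) = [(-1, J (m + n))]"
| "brk (J n) (H m) = [(1, J (m + n))]"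
| "brk _ _ = []"

definition cvs :: "(complex \<Rightarrow> 'v::ab_group_add \<Rightarrow> 'v) \<Rightarrow> 'v set \<Rightarrow> bool" where
  "cvs s V \<longleftrightarrow> 0 \<in> V \<and> (\<forall>x\<in>V. \<forall>y\<in>V. x + y \<in> V) \<and> (\<forall>c. \<forall>x\<in>V. s c x \<in> V)
     \<and> (\<forall>a. \<forall>x\<in>V. \<forall>y\<in>V. s a (x + y) = s a x + s a y)
     \<and> (\<forall>a b. \<forall>x\<in>V. s (a + b) x = s a x + s b x)
     \<and> (\<forall>a b. \<forall>x\<in>V. s a (s b x) = s (a * b) x)
     \<and> (\<forall>x\<in>V. s 1 x = x)"

definition gmod :: "(complex \<Rightarrow> 'v::ab_group_add \<Rightarrow> 'v) \<Rightarrow> 'v set \<Rightarrow> (gbasis \<Rightarrow> 'v \<Rightarrow> 'v) \<Rightarrow> bool" where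
  "gmod s V \<rho> \<longleftrightarrow> cvs s V
     \<and> (\<forall>e. \<forall>x\<in>V. \<rho> e x \<in> V)
     \<and> (\<forall>e. \<forall>x\<in>V. \<forall>y\<in>V. \<rho> e (x + y) = \<rho> e x + \<rho> e y)
     \<and> (\<forall>e c. \<forall>x\<in>V. \<rho> e (s c x) = s c (\<rho> e x))
     \<and> (\<forall>e f. \<forall>x\<in>V. \<rho> e (\<rho> f x) - \<rho> f (\<rho> e x)
                        = sum_list (map (\<lambda>(c, g). s c (\<rho> g x)) (brk e f)))"

definition irreducible_gmod :: "(complex \<Rightarrow> 'v::ab_group_add \<Rightarrow> 'v) \<Rightarrow> 'v set \<Rightarrow> (gbasis \<Rightarrow> 'v \<Rightarrow> 'v) \<Rightarrow> bool" where
  "irreducible_gmod s V \<rho> \<longleftrightarrow> gmod s V \<rho> \<and> V \<noteq> {0}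
     \<and> (\<forall>W. W \<subseteq> V \<and> 0 \<in> W \<and> (\<forall>x\<in>W. \<forall>y\<in>W. x + y \<in> W) \<and> (\<forall>c. \<forall>x\<in>W. s c x \<in> W)
            \<and> (\<forall>e. \<forall>x\<in>W. \<rho> e x \<in> W) \<longrightarrow> W = {0} \<or> W = V)"

text \<open>Restricted: every vector is killed by all G^i, i > N (G^i spanned by L_i,H_i,I_i,J_i for i > 0).\<close>
definition restricted_gmod :: "'v::ab_group_add set \<Rightarrow> (gbasis \<Rightarrow> 'v \<Rightarrow> 'v) \<Rightarrow> bool" where
  "restricted_gmod V \<rho> \<longleftrightarrow> (\<forall>v\<in>V. \<exists>N::nat. \<forall>i::int. i > int N \<longrightarrow>
      \<rho> (L i) v = 0 \<and> \<rho> (H i) v = 0 \<and> \<rho> (I i) v = 0 \<and> \<rho> (J i) v = 0)"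

definition gmod_iso :: "(complex \<Rightarrow> 'v::ab_group_add \<Rightarrow> 'v) \<Rightarrow> 'v set \<Rightarrow> (gbasis \<Rightarrow> 'v \<Rightarrow> 'v)
     \<Rightarrow> (complex \<Rightarrow> 'w::ab_group_add \<Rightarrow> 'w) \<Rightarrow> 'w set \<Rightarrow> (gbasis \<Rightarrow> 'w \<Rightarrow> 'w) \<Rightarrow> bool" where
  "gmod_iso s1 V1 \<rho>1 s2 V2 \<rho>2 \<longleftrightarrow> (\<exists>\<phi>. bij_betw \<phi> V1 V2
     \<and> (\<forall>x\<in>V1. \<forall>y\<in>V1. \<phi> (x + y) = \<phi> x + \<phi> y)
     \<and> (\<forall>c. \<forall>x\<in>V1. \<phi> (s1 c x) = s2 c (\<phi> x))
     \<and> (\<forall>e. \<forall>x\<in>V1. \<phi> (\<rho>1 e x) = \<rho>2 e (\<phi> x)))"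

text \<open>Model of C[X,Y] \<otimes> R: R-valued polynomial functions on C^2, i.e. functions
  (x,y) \<mapsto> sum over (a,b) of x^a y^b v_(a,b) with finitely many v_(a,b) \<in> R.
  (Under this identification f \<otimes> v corresponds to (x,y) \<mapsto> f(x,y) v.)\<close>
definition tcar :: "(complex \<Rightarrow> 'v::ab_group_add \<Rightarrow> 'v) \<Rightarrow> 'v set \<Rightarrow> (complex \<times> complex \<Rightarrow> 'v) set" where
  "tcar s V = {F. \<exists>A c. finite A \<and> (\<forall>ab\<in>A. c ab \<in> V)
       \<and> F = (\<lambda>(x, y). \<Sum>ab\<in>A. s (x ^ fst ab * y ^ snd ab) (c ab))}"

definition tsmul :: "(complex \<Rightarrow> 'v::ab_group_add \<Rightarrow> 'v) \<Rightarrow> complex \<Rightarrow> (complex \<times> complex \<Rightarrow> 'v) \<Rightarrow> (complex \<times> complex \<Rightarrow> 'v)" where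
  "tsmul s c F = (\<lambda>p. s c (F p))"

text \<open>Action on Omega(lam,eta,sig,0) \<otimes> R:  x(f \<otimes> v) = xf \<otimes> v + f \<otimes> xv.\<close>
definition omegaA_tensor :: "(complex \<Rightarrow> 'v::ab_group_add \<Rightarrow> 'v) \<Rightarrow> (gbasis \<Rightarrow> 'v \<Rightarrow> 'v)
     \<Rightarrow> complex \<Rightarrow> complex \<Rightarrow> complex \<Rightarrow> gbasis \<Rightarrow> (complex \<times> complex \<Rightarrow> 'v) \<Rightarrow> (complex \<times> complex \<Rightarrow> 'v)" where
  "omegaA_tensor s \<rho> lam eta sig e F = (\<lambda>(x, y). (case e of
       L m \<Rightarrow> s (lam powi m * (y - of_int m * x + of_int m * eta)) (F (x, y - of_int m))
     | H m \<Rightarrow> s (lam powi m * x) (F (x, y - of_int m))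
     | I m \<Rightarrow> s (lam powi m * sig) (F (x - 1, y - of_int m))
     | _ \<Rightarrow> 0) + \<rho> e (F (x, y)))"

definition omegaB_tensor :: "(complex \<Rightarrow> 'v::ab_group_add \<Rightarrow> 'v) \<Rightarrow> (gbasis \<Rightarrow> 'v \<Rightarrow> 'v)
     \<Rightarrow> complex \<Rightarrow> complex \<Rightarrow> complex \<Rightarrow> gbasis \<Rightarrow> (complex \<times> complex \<Rightarrow> 'v) \<Rightarrow> (complex \<times> complex \<Rightarrow> 'v)" where
  "omegaB_tensor s \<rho> lam eta sig e F = (\<lambda>(x, y). (case e of
       L m \<Rightarrow> s (lam powi m * (y + of_int m * x + of_int m * eta)) (F (x, y - of_int m))
     | H m \<Rightarrow> s (lam powi m * x) (F (x, y - of_int m))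
     | J m \<Rightarrow> s (lam powi m * sig) (F (x + 1, y - of_int m))
     | _ \<Rightarrow> 0) + \<rho> e (F (x, y)))"

end

(*
  Fix an isomorphism phi between two of the tensor modules. For a fixed element F and a generator
  e_k among H_k, L_k, I_k, J_k, the vector e_k F is lambda^k times a sequence depending polynomially
  on k, plus the action of e_k on the factor R, which vanishes for k >> 0 because R is restricted.
  Comparing H_k on both sides therefore gives lambda = lambda1. A polynomial sequence that vanishes
  for k >> 0 vanishes identically (its high forward differences are zero), so phi commutes with the
  Omega-parts of all these generators for every k. For k = 0 this says that phi is linear over
  C[X, Y]; evaluating the identities for L_1 and I_0 (resp. J_0) then forces eta = eta1 and
  sigma = sigma1. Consequently phi also commutes with the action on the second factor, and it
  induces an isomorphism R = (Omega (x) R) / (X, Y) --> (Omega (x) S) / (X, Y) = S. Conversely an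
  isomorphism R --> S acts coefficientwise. Finally, for k >> 0 the generator J_k annihilates the
  constants of Omega(lambda, eta, sigma, 0) (x) R but acts injectively on
  Omega(lambda1, eta1, 0, sigma1) (x) S, so these modules are never isomorphic.
*)
theory Submission
  imports Defs
begin

lemma cvsD:
  assumes "cvs s V"
  shows "0 \<in> V" "\<And>x y. x \<in> V \<Longrightarrow> y \<in> V \<Longrightarrow> x + y \<in> V" "\<And>c x. x \<in> V \<Longrightarrow> s c x \<in> V"
    "\<And>a x y. x \<in> V \<Longrightarrow> y \<in> V \<Longrightarrow> s a (x + y) = s a x + s a y"
    "\<And>a b x. x \<in> V \<Longrightarrow> s (a + b) x = s a x + s b x"
    "\<And>a b x. x \<in> V \<Longrightarrow> s a (s b x) = s (a * b) x"
    "\<And>x. x \<in> V \<Longrightarrow> s 1 x = x"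
  using assms unfolding cvs_def by blast+

lemma cvs_scale_zero_right: "cvs s V \<Longrightarrow> s c 0 = 0"
  using cvsD(4)[of s V 0 0 c] cvsD(1)[of s V] by simp

lemma cvs_scale_zero_left: "cvs s V \<Longrightarrow> u \<in> V \<Longrightarrow> s 0 u = 0"
  using cvsD(5)[of s V u 0 0] by simp

lemma cvs_scale_minus_left: "cvs s V \<Longrightarrow> u \<in> V \<Longrightarrow> s (- c) u = - s c u"
  using cvsD(5)[of s V u c "- c"] cvs_scale_zero_left[of s V u] by (simp add: eq_neg_iff_add_eq_0 add.commute)

lemma cvs_scale_minus_one: "cvs s V \<Longrightarrow> u \<in> V \<Longrightarrow> s (- 1) u = - u"
  using cvs_scale_minus_left[of s V u 1] cvsD(7)[of s V u] by simp

lemma cvs_minus_mem: "cvs s V \<Longrightarrow> u \<in> V \<Longrightarrow> - u \<in> V"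
  using cvs_scale_minus_left[of s V u 1] cvsD(3,7)[of s V u] by metis

lemma cvs_diff_mem: "cvs s V \<Longrightarrow> u \<in> V \<Longrightarrow> v \<in> V \<Longrightarrow> u - v \<in> V"
  using cvsD(2)[of s V u "- v"] cvs_minus_mem[of s V v] by simp

lemma cvs_scale_diff_left: "cvs s V \<Longrightarrow> u \<in> V \<Longrightarrow> s (a - b) u = s a u - s b u"
  using cvsD(5)[of s V u a "- b"] cvs_scale_minus_left[of s V u b] by simp

lemma cvs_scale_diff_right:
  assumes "cvs s V" "u \<in> V" "v \<in> V"
  shows "s c (u - v) = s c u - s c v"
proof -
  have "s c (- v) = - s c v"
    using cvsD(6,7)[OF assms(1,3)] cvs_scale_minus_left[OF assms(1,3), of 1]
      cvs_scale_minus_left[OF assms(1,3), of c] by (metis mult_minus1_right)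
  then show ?thesis
    using cvsD(4)[OF assms(1,2) cvs_minus_mem[OF assms(1,3)], of c] by simp
qed

lemma cvs_scale_cancel:
  assumes "cvs s V" "u \<in> V" "a \<noteq> 0" "s a u = 0"
  shows "u = 0"
proof -
  have "u = s (inverse a) (s a u)" using assms(3) cvsD(6,7)[OF assms(1,2)] by simp
  then show ?thesis using assms(4) cvs_scale_zero_right[OF assms(1)] by simp
qed

lemma cvs_scale_left_cancel:
  assumes "cvs s V" "u \<in> V" "a \<noteq> b" "s a u = s b u"
  shows "u = 0"
  using cvs_scale_cancel[OF assms(1,2), of "a - b"] assms(3,4) cvs_scale_diff_left[OF assms(1,2)]
  by simp

lemma cvs_scale_right_cancel:
  assumes "cvs s V" "u \<in> V" "v \<in> V" "a \<noteq> 0" "s a u = s a v"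
  shows "u = v"
  using cvs_scale_cancel[OF assms(1) cvs_diff_mem[OF assms(1-3)] assms(4)] assms(5)
    cvs_scale_diff_right[OF assms(1-3)] by simp

lemma cvs_scale_solve:
  assumes "cvs s V" "x \<in> V" "u \<in> V" "a \<noteq> 0" "s a x = s b u"
  shows "x = s (b / a) u"
proof -
  have "x = s (inverse a) (s a x)" using assms(4) cvsD(6,7)[OF assms(1,2)] by simp
  then show ?thesis using assms(5) cvsD(6)[OF assms(1,3)] by (simp add: field_simps)
qed

definition cvs_linear :: "(complex \<Rightarrow> 'a::ab_group_add \<Rightarrow> 'a) \<Rightarrow> 'a set
    \<Rightarrow> (complex \<Rightarrow> 'b::ab_group_add \<Rightarrow> 'b) \<Rightarrow> 'b set \<Rightarrow> ('a \<Rightarrow> 'b) \<Rightarrow> bool" where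
  "cvs_linear s1 V1 s2 V2 f \<longleftrightarrow> (\<forall>x\<in>V1. f x \<in> V2)
     \<and> (\<forall>x\<in>V1. \<forall>y\<in>V1. f (x + y) = f x + f y) \<and> (\<forall>c. \<forall>x\<in>V1. f (s1 c x) = s2 c (f x))"

lemma cvs_linearD:
  assumes "cvs_linear s1 V1 s2 V2 f"
  shows "\<And>x. x \<in> V1 \<Longrightarrow> f x \<in> V2" "\<And>x y. x \<in> V1 \<Longrightarrow> y \<in> V1 \<Longrightarrow> f (x + y) = f x + f y"
    "\<And>c x. x \<in> V1 \<Longrightarrow> f (s1 c x) = s2 c (f x)"
  using assms unfolding cvs_linear_def by blast+

lemma cvs_linear_zero: "cvs s1 V1 \<Longrightarrow> cvs_linear s1 V1 s2 V2 f \<Longrightarrow> f 0 = 0"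
  using cvsD(1)[of s1 V1] cvs_linearD(2)[of s1 V1 s2 V2 f 0 0] by simp

lemma cvs_linear_scale: "cvs s V \<Longrightarrow> cvs_linear s V s V (s c)"
  unfolding cvs_linear_def by (simp add: cvsD mult.commute)

lemma cvs_linear_diff:
  assumes "cvs s1 V1" "cvs s2 V2" "cvs_linear s1 V1 s2 V2 f" "u \<in> V1" "v \<in> V1"
  shows "f (u - v) = f u - f v"
  using cvs_linearD[OF assms(3)] cvsD(3)[OF assms(1)] assms(4,5)
    cvs_scale_minus_one[OF assms(1,5)] cvs_scale_minus_one[OF assms(2) cvs_linearD(1)[OF assms(3,5)]]
  by (metis diff_conv_add_uminus)

lemma cvs_linear_inj_on:
  assumes "cvs s1 V1" "cvs s2 V2" "cvs_linear s1 V1 s2 V2 f" "\<And>v. v \<in> V1 \<Longrightarrow> f v = 0 \<Longrightarrow> v = 0"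
  shows "inj_on f V1"
  using assms(4)[OF cvs_diff_mem[OF assms(1)]] cvs_linear_diff[OF assms(1-3)] by (intro inj_onI) fastforce

lemma cvs_linear_comp:
  "cvs_linear s1 V1 s2 V2 f \<Longrightarrow> cvs_linear s2 V2 s3 V3 g \<Longrightarrow> cvs_linear s1 V1 s3 V3 (g \<circ> f)"
  unfolding cvs_linear_def by simp

lemma cvs_linear_inv_into:
  assumes "cvs s1 V1" "bij_betw f V1 V2" "cvs_linear s1 V1 s2 V2 f"
  shows "cvs_linear s2 V2 s1 V1 (inv_into V1 f)"
proof -
  have inv: "inv_into V1 f y \<in> V1" "f (inv_into V1 f y) = y" if "y \<in> V2" for y
    using that assms(2) by (auto simp: bij_betw_def inv_into_into f_inv_into_f)
  have eq: "x = inv_into V1 f y" if "x \<in> V1" "f x = y" for x y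
    using that assms(2) by (auto simp: bij_betw_def inv_into_f_f)
  show ?thesis
    unfolding cvs_linear_def
    using inv cvsD(2,3)[OF assms(1)] cvs_linearD[OF assms(3)] by (auto intro!: eq[symmetric])
qed

section \<open>Forward differences and polynomial sequences\<close>

definition forward_diff :: "(int \<Rightarrow> 'a::ab_group_add) \<Rightarrow> int \<Rightarrow> 'a" where
  "forward_diff f k = f (k + 1) - f k"

lemma funpow_forward_diff_zero: "(forward_diff ^^ n) (\<lambda>k. 0) = (\<lambda>k. 0)"
  by (induction n) (simp_all add: forward_diff_def)

lemma funpow_forward_diff_mono:
  assumes "(forward_diff ^^ n) f = (\<lambda>k. 0)" "n \<le> m"
  shows "(forward_diff ^^ m) f = (\<lambda>k. 0)"
proof -
  have "(forward_diff ^^ m) f = (forward_diff ^^ (m - n)) ((forward_diff ^^ n) f)"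
    using assms(2) by (metis funpow_add le_add_diff_inverse2 o_apply)
  then show ?thesis using assms(1) funpow_forward_diff_zero by simp
qed

lemma funpow_forward_diff_add:
  "(forward_diff ^^ n) (\<lambda>k. f k + g k) = (\<lambda>k. (forward_diff ^^ n) f k + (forward_diff ^^ n) g k)"
proof (induction n arbitrary: f g)
  case (Suc n)
  have "forward_diff (\<lambda>k. f k + g k) = (\<lambda>k. forward_diff f k + forward_diff g k)"
    by (simp add: forward_diff_def fun_eq_iff algebra_simps)
  then show ?case by (simp add: funpow_Suc_right Suc.IH del: funpow.simps)
qed simp

lemma funpow_forward_diff_shift:
  "(forward_diff ^^ n) (\<lambda>k. f (k + 1)) = (\<lambda>k. (forward_diff ^^ n) f (k + 1))"
proof (induction n arbitrary: f)
  case (Suc n)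
  have "forward_diff (\<lambda>k. f (k + 1)) = (\<lambda>k. forward_diff f (k + 1))"
    unfolding forward_diff_def ..
  then show ?case by (simp add: funpow_Suc_right Suc.IH del: funpow.simps)
qed simp

lemma funpow_forward_diff_cong:
  assumes "\<And>k. k > M \<Longrightarrow> f k = g k" "k > M"
  shows "(forward_diff ^^ n) f k = (forward_diff ^^ n) g k"
  using assms
proof (induction n arbitrary: f g)
  case (Suc n)
  have "forward_diff f k = forward_diff g k" if "k > M" for k
    using Suc.prems(1) that by (simp add: forward_diff_def)
  then show ?case
    using Suc.IH[of "forward_diff f" "forward_diff g"] Suc.prems(2)
    by (simp add: funpow_Suc_right del: funpow.simps)
qed simp

lemma funpow_forward_diff_eventually_zero:
  assumes "(forward_diff ^^ n) f = (\<lambda>k. 0)" "\<And>k. k > M \<Longrightarrow> f k = 0"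
  shows "f k = 0"
  using assms
proof (induction n arbitrary: f k)
  case 0
  then show ?case by (simp add: fun_eq_iff)
next
  case (Suc n)
  have "forward_diff f j = 0" for j
    by (rule Suc.IH) (use Suc.prems in \<open>simp_all add: funpow_Suc_right forward_diff_def del: funpow.simps\<close>)
  then have step: "f (j + 1) = f j" for j by (simp add: forward_diff_def)
  have "f k = f (M + 1)"
  proof (induction k rule: int_induct[where k = "M + 1"])
    case (step2 i) then show ?case using step[of "i - 1"] by simp
  qed (use step in simp_all)
  then show ?case using Suc.prems(2) by simp
qed

lemma forward_diff_times:
  assumes "cvs s V" "\<And>k. f k \<in> V"
  shows "forward_diff (\<lambda>k. s (of_int k) (f k)) = (\<lambda>k. s (of_int k) (forward_diff f k) + f (k + 1))"
proof
  fix k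
  have "s (of_int (k + 1)) (f (k + 1)) = s (of_int k) (f (k + 1)) + f (k + 1)"
    using cvsD(5,7)[OF assms(1) assms(2)] by simp
  then show "forward_diff (\<lambda>k. s (of_int k) (f k)) k = s (of_int k) (forward_diff f k) + f (k + 1)"
    unfolding forward_diff_def using cvs_scale_diff_right[OF assms(1) assms(2) assms(2)] by simp
qed

lemma funpow_forward_diff_times:
  assumes "cvs s V" "\<And>k. f k \<in> V" "(forward_diff ^^ n) f = (\<lambda>k. 0)"
  shows "(forward_diff ^^ Suc n) (\<lambda>k. s (of_int k) (f k)) = (\<lambda>k. 0)"
  using assms(2,3)
proof (induction n arbitrary: f)
  case 0
  then show ?case by (simp add: forward_diff_def cvs_scale_zero_right[OF assms(1)])
next
  case (Suc n)
  have "forward_diff f k \<in> V" for k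
    unfolding forward_diff_def using Suc.prems(1) cvs_diff_mem[OF assms(1)] by blast
  moreover have "(forward_diff ^^ n) (forward_diff f) = (\<lambda>k. 0)"
    using Suc.prems(2) by (simp add: funpow_Suc_right del: funpow.simps)
  ultimately have "(forward_diff ^^ Suc n) (\<lambda>k. s (of_int k) (forward_diff f k)) = (\<lambda>k. 0)"
    by (rule Suc.IH)
  moreover have "(forward_diff ^^ Suc n) (\<lambda>k. f (k + 1)) = (\<lambda>k. 0)"
    using Suc.prems(2) funpow_forward_diff_shift[of "Suc n" f] by simp
  ultimately have "(forward_diff ^^ Suc n) (\<lambda>k. s (of_int k) (forward_diff f k) + f (k + 1)) = (\<lambda>k. 0)"
    by (simp only: funpow_forward_diff_add) simp
  then show ?case
    by (simp only: funpow_Suc_right[of "Suc n"] o_apply forward_diff_times[OF assms(1) Suc.prems(1)])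
qed

lemma funpow_forward_diff_geometric:
  assumes "cvs s V" "u \<in> V" "c \<noteq> 0"
  shows "(forward_diff ^^ n) (\<lambda>k. s (a * c powi k) u) = (\<lambda>k. s (a * (c - 1) ^ n * c powi k) u)"
proof (induction n arbitrary: a)
  case (Suc n)
  have "forward_diff (\<lambda>k. s (a * c powi k) u) = (\<lambda>k. s (a * (c - 1) * c powi k) u)"
    using assms(3) by (simp add: forward_diff_def fun_eq_iff cvs_scale_diff_left[OF assms(1,2), symmetric]
        power_int_add algebra_simps)
  then have "(forward_diff ^^ Suc n) (\<lambda>k. s (a * c powi k) u)
      = (forward_diff ^^ n) (\<lambda>k. s (a * (c - 1) * c powi k) u)"
    by (simp only: funpow_Suc_right o_apply)
  also have "\<dots> = (\<lambda>k. s (a * (c - 1) * (c - 1) ^ n * c powi k) u)"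
    by (rule Suc.IH)
  finally show ?case by (simp add: mult.assoc)
qed simp

text \<open>Sequences of the form \<open>k \<mapsto> \<Sum>\<^sub>i p\<^sub>i(k) u\<^sub>i\<close> with polynomials \<open>p\<^sub>i\<close> and vectors \<open>u\<^sub>i \<in> V\<close>.\<close>
inductive poly_seq :: "(complex \<Rightarrow> 'a::ab_group_add \<Rightarrow> 'a) \<Rightarrow> 'a set \<Rightarrow> (int \<Rightarrow> 'a) \<Rightarrow> bool"
  for s V where
  poly_seq_const: "u \<in> V \<Longrightarrow> poly_seq s V (\<lambda>k. u)"
| poly_seq_add: "poly_seq s V f \<Longrightarrow> poly_seq s V g \<Longrightarrow> poly_seq s V (\<lambda>k. f k + g k)"
| poly_seq_times: "poly_seq s V f \<Longrightarrow> poly_seq s V (\<lambda>k. s (of_int k) (f k))"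

lemma poly_seq_mem:
  assumes "cvs s V" "poly_seq s V f"
  shows "f k \<in> V"
  using assms(2) by induction (simp_all add: cvsD[OF assms(1)])

lemma poly_seq_linear_image:
  assumes "cvs s1 V1" "cvs_linear s1 V1 s2 V2 g" "poly_seq s1 V1 f"
  shows "poly_seq s2 V2 (\<lambda>k. g (f k))"
  using assms(3)
proof induction
  case (poly_seq_const u)
  then show ?case using cvs_linearD(1)[OF assms(2)] poly_seq.poly_seq_const by blast
next
  case (poly_seq_add f f')
  then show ?case
    using poly_seq.poly_seq_add cvs_linearD(2)[OF assms(2)] poly_seq_mem[OF assms(1)] by simp
next
  case (poly_seq_times f)
  then show ?case
    using poly_seq.poly_seq_times cvs_linearD(3)[OF assms(2)] poly_seq_mem[OF assms(1)] by simp
qed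

lemma poly_seq_diff:
  assumes "cvs s V" "poly_seq s V f" "poly_seq s V g"
  shows "poly_seq s V (\<lambda>k. f k - g k)"
proof -
  have "poly_seq s V (\<lambda>k. f k + s (- 1) (g k))"
    by (intro poly_seq_add assms(2) poly_seq_linear_image[OF assms(1) cvs_linear_scale[OF assms(1)] assms(3)])
  then show ?thesis using cvs_scale_minus_one[OF assms(1) poly_seq_mem[OF assms(1,3)]] by simp
qed

lemma poly_seq_forward_diff_vanishes:
  assumes "cvs s V" "poly_seq s V f"
  shows "\<exists>n. (forward_diff ^^ n) f = (\<lambda>k. 0)"
  using assms(2)
proof induction
  case (poly_seq_const u)
  show ?case by (rule exI[of _ 1]) (simp add: forward_diff_def)
next
  case (poly_seq_add f g)
  then obtain m n where "(forward_diff ^^ m) f = (\<lambda>k. 0)" "(forward_diff ^^ n) g = (\<lambda>k. 0)" by blast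
  then have "(forward_diff ^^ max m n) f = (\<lambda>k. 0)" "(forward_diff ^^ max m n) g = (\<lambda>k. 0)"
    by (auto intro: funpow_forward_diff_mono)
  then show ?case by (intro exI[of _ "max m n"]) (simp add: funpow_forward_diff_add)
next
  case (poly_seq_times f)
  then obtain n where "(forward_diff ^^ n) f = (\<lambda>k. 0)" by blast
  moreover have "\<And>k. f k \<in> V" using poly_seq_mem[OF assms(1) poly_seq_times(1)] .
  ultimately show ?case using funpow_forward_diff_times[OF assms(1)] by blast
qed

lemma poly_seq_eventually_eq:
  assumes "cvs s V" "poly_seq s V f" "poly_seq s V g" "\<And>k. k > M \<Longrightarrow> f k = g k"
  shows "f k = g k"
proof -
  obtain n where "(forward_diff ^^ n) (\<lambda>k. f k - g k) = (\<lambda>k. 0)"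
    using poly_seq_forward_diff_vanishes[OF assms(1) poly_seq_diff[OF assms(1-3)]] by blast
  then have "f k - g k = 0"
    by (rule funpow_forward_diff_eventually_zero[where M = M]) (simp add: assms(4))
  then show ?thesis by simp
qed

text \<open>The \<open>n\<close>-th difference of \<open>c\<^sup>k u\<close> is \<open>(c - 1)\<^sup>n c\<^sup>k u\<close>, which vanishes only for \<open>c = 1\<close>.\<close>
lemma poly_seq_eventually_geometric:
  assumes "cvs s V" "poly_seq s V f" "u \<in> V" "u \<noteq> 0" "c \<noteq> 0"
    and "\<And>k. k > M \<Longrightarrow> f k = s (c powi k) u"
  shows "c = 1"
proof (rule ccontr)
  assume "c \<noteq> 1"
  obtain n where n: "(forward_diff ^^ n) f = (\<lambda>k. 0)"
    using poly_seq_forward_diff_vanishes[OF assms(1,2)] by blast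
  have "(forward_diff ^^ n) f (M + 1) = (forward_diff ^^ n) (\<lambda>k. s (1 * c powi k) u) (M + 1)"
    by (rule funpow_forward_diff_cong[where M = M]) (simp_all add: assms(6))
  also have "\<dots> = s (1 * (c - 1) ^ n * c powi (M + 1)) u"
    by (simp only: funpow_forward_diff_geometric[OF assms(1,3,5)])
  finally have "s ((c - 1) ^ n * c powi (M + 1)) u = 0"
    using n by simp
  moreover have "(c - 1) ^ n * c powi (M + 1) \<noteq> 0" using assms(5) \<open>c \<noteq> 1\<close> by simp
  ultimately show False
    using cvs_scale_cancel[OF assms(1,3)] assms(4) by blast
qed

section \<open>The carrier of \<open>\<Omega> \<otimes> R\<close>\<close>

definition tmonomial :: "(complex \<Rightarrow> 'v::ab_group_add \<Rightarrow> 'v) \<Rightarrow> nat \<Rightarrow> nat \<Rightarrow> 'v \<Rightarrow> complex \<times> complex \<Rightarrow> 'v" where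
  "tmonomial s a b v = (\<lambda>(x, y). s (x ^ a * y ^ b) v)"

definition tmult :: "(complex \<Rightarrow> 'v::ab_group_add \<Rightarrow> 'v) \<Rightarrow> (complex \<times> complex \<Rightarrow> complex)
    \<Rightarrow> (complex \<times> complex \<Rightarrow> 'v) \<Rightarrow> complex \<times> complex \<Rightarrow> 'v" where
  "tmult s P F = (\<lambda>p. s (P p) (F p))"

definition tshift :: "complex \<Rightarrow> complex \<Rightarrow> (complex \<times> complex \<Rightarrow> 'v) \<Rightarrow> complex \<times> complex \<Rightarrow> 'v" where
  "tshift a b F = (\<lambda>(x, y). F (x - a, y - b))"

lemma tcar_tmonomial: "v \<in> V \<Longrightarrow> tmonomial s a b v \<in> tcar s V"
  unfolding tcar_def tmonomial_def
  by (intro CollectI exI[of _ "{(a, b)}"] exI[of _ "\<lambda>_. v"]) auto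

lemma tcar_induct [consumes 1, case_names zero monomial add]:
  assumes "F \<in> tcar s V"
    and "P 0"
    and "\<And>a b v. v \<in> V \<Longrightarrow> P (tmonomial s a b v)"
    and "\<And>F G. F \<in> tcar s V \<Longrightarrow> G \<in> tcar s V \<Longrightarrow> P F \<Longrightarrow> P G \<Longrightarrow> P (F + G)"
  shows "P F"
proof -
  obtain A c where A: "finite A" "\<forall>ab\<in>A. c ab \<in> V"
    and F: "F = (\<lambda>(x, y). \<Sum>ab\<in>A. s (x ^ fst ab * y ^ snd ab) (c ab))"
    using assms(1) unfolding tcar_def by blast
  have "P (\<lambda>(x, y). \<Sum>ab\<in>A. s (x ^ fst ab * y ^ snd ab) (c ab))"
    using A
  proof (induction A rule: finite_induct)
    case empty
    then show ?case using assms(2) by (simp add: zero_fun_def case_prod_beta)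
  next
    case (insert ab A)
    have eq: "(\<lambda>(x, y). \<Sum>ab\<in>insert ab A. s (x ^ fst ab * y ^ snd ab) (c ab))
        = tmonomial s (fst ab) (snd ab) (c ab) + (\<lambda>(x, y). \<Sum>ab\<in>A. s (x ^ fst ab * y ^ snd ab) (c ab))"
      using insert.hyps by (auto simp: fun_eq_iff tmonomial_def)
    have rest: "(\<lambda>(x, y). \<Sum>ab\<in>A. s (x ^ fst ab * y ^ snd ab) (c ab)) \<in> tcar s V"
      unfolding tcar_def using insert by blast
    have c: "c ab \<in> V" using insert.prems by simp
    show ?case
      unfolding eq using insert.prems
      by (intro assms(4)[OF tcar_tmonomial[OF c] rest assms(3)[OF c] insert.IH]) simp
  qed
  then show ?thesis using F by simp
qed

lemma tcar_mem:
  assumes "cvs s V" "F \<in> tcar s V"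
  shows "F p \<in> V"
  using assms(2) by (induction rule: tcar_induct) (auto simp: tmonomial_def cvsD[OF assms(1)] case_prod_beta)

lemma tcar_zero: "0 \<in> tcar s V"
  unfolding tcar_def by (intro CollectI exI[of _ "{}"]) (auto simp: zero_fun_def)

lemma tcar_const:
  assumes "cvs s V" "v \<in> V"
  shows "(\<lambda>_. v) \<in> tcar s V"
proof -
  have "tmonomial s 0 0 v = (\<lambda>_. v)" by (simp add: tmonomial_def fun_eq_iff cvsD(7)[OF assms])
  then show ?thesis using tcar_tmonomial[OF assms(2)] by metis
qed

lemma tcar_iff:
  "F \<in> tcar s V \<longleftrightarrow> (\<exists>A c. finite A \<and> (\<forall>ab\<in>A. c ab \<in> V)
     \<and> (\<forall>p. F p = (\<Sum>ab\<in>A. s (fst p ^ fst ab * snd p ^ snd ab) (c ab))))"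
  unfolding tcar_def by (simp add: fun_eq_iff case_prod_beta)

lemma tcar_add:
  assumes "cvs s V" "F \<in> tcar s V" "G \<in> tcar s V"
  shows "F + G \<in> tcar s V"
proof -
  obtain A c where A: "finite A" "\<forall>ab\<in>A. c ab \<in> V"
    "\<And>p. F p = (\<Sum>ab\<in>A. s (fst p ^ fst ab * snd p ^ snd ab) (c ab))"
    using assms(2) unfolding tcar_iff by blast
  obtain B d where B: "finite B" "\<forall>ab\<in>B. d ab \<in> V"
    "\<And>p. G p = (\<Sum>ab\<in>B. s (fst p ^ fst ab * snd p ^ snd ab) (d ab))"
    using assms(3) unfolding tcar_iff by blast
  define c' where "c' ab = (if ab \<in> A then c ab else 0)" for ab
  define d' where "d' ab = (if ab \<in> B then d ab else 0)" for ab
  have V: "c' ab \<in> V" "d' ab \<in> V" for ab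
    unfolding c'_def d'_def using A(2) B(2) cvsD(1)[OF assms(1)] by auto
  have "(F + G) p = (\<Sum>ab\<in>A \<union> B. s (fst p ^ fst ab * snd p ^ snd ab) (c' ab + d' ab))" for p
  proof -
    have "F p = (\<Sum>ab\<in>A \<union> B. s (fst p ^ fst ab * snd p ^ snd ab) (c' ab))"
      unfolding A(3) c'_def using A(1) B(1) cvs_scale_zero_right[OF assms(1)]
      by (intro sum.mono_neutral_cong_left) auto
    moreover have "G p = (\<Sum>ab\<in>A \<union> B. s (fst p ^ fst ab * snd p ^ snd ab) (d' ab))"
      unfolding B(3) d'_def using A(1) B(1) cvs_scale_zero_right[OF assms(1)]
      by (intro sum.mono_neutral_cong_left) auto
    ultimately show ?thesis
      using cvsD(4)[OF assms(1) V] by (simp add: sum.distrib)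
  qed
  moreover have "\<forall>ab\<in>A \<union> B. c' ab + d' ab \<in> V" using V cvsD(2)[OF assms(1)] by blast
  ultimately show ?thesis
    unfolding tcar_iff using A(1) B(1) by (intro exI[of _ "A \<union> B"] exI[of _ "\<lambda>ab. c' ab + d' ab"]) auto
qed

lemma tcar_pointwise:
  assumes "cvs s1 V1" "cvs s2 V2" "cvs_linear s1 V1 s2 V2 g" "F \<in> tcar s1 V1"
  shows "(\<lambda>p. g (F p)) \<in> tcar s2 V2"
  using assms(4)
proof (induction rule: tcar_induct)
  case zero
  then show ?case using cvs_linear_zero[OF assms(1,3)] tcar_zero by (simp add: zero_fun_def)
next
  case (monomial a b v)
  then have "(\<lambda>p. g (tmonomial s1 a b v p)) = tmonomial s2 a b (g v)"
    using cvs_linearD(3)[OF assms(3)] by (auto simp: tmonomial_def)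
  then show ?case using tcar_tmonomial cvs_linearD(1)[OF assms(3)] monomial by metis
next
  case (add F G)
  then have "(\<lambda>p. g ((F + G) p)) = (\<lambda>p. g (F p)) + (\<lambda>p. g (G p))"
    using cvs_linearD(2)[OF assms(3)] tcar_mem[OF assms(1)] by (simp add: fun_eq_iff)
  then show ?case using tcar_add[OF assms(2) add.IH] by simp
qed

lemma tcar_scale: "cvs s V \<Longrightarrow> F \<in> tcar s V \<Longrightarrow> tsmul s c F \<in> tcar s V"
  unfolding tsmul_def by (rule tcar_pointwise[OF _ _ cvs_linear_scale])

lemma cvs_tcar: "cvs s V \<Longrightarrow> cvs (tsmul s) (tcar s V)"
  unfolding cvs_def[of "tsmul s"]
  by (simp add: tcar_zero tcar_add tcar_scale) (simp add: tsmul_def fun_eq_iff cvsD tcar_mem)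

lemma tcar_tmult_monomial:
  assumes "cvs s V" "F \<in> tcar s V"
  shows "tmult s (\<lambda>(x, y). x ^ i * y ^ j) F \<in> tcar s V"
  using assms(2)
proof (induction rule: tcar_induct)
  case zero
  then show ?case using tcar_zero cvs_scale_zero_right[OF assms(1)] by (simp add: tmult_def zero_fun_def)
next
  case (monomial a b v)
  then have "tmult s (\<lambda>(x, y). x ^ i * y ^ j) (tmonomial s a b v) = tmonomial s (a + i) (b + j) v"
    by (auto simp: tmult_def tmonomial_def cvsD[OF assms(1)] power_add mult_ac)
  then show ?case using tcar_tmonomial monomial by metis
next
  case (add F G)
  have "tmult s (\<lambda>(x, y). x ^ i * y ^ j) (F + G)
      = tmult s (\<lambda>(x, y). x ^ i * y ^ j) F + tmult s (\<lambda>(x, y). x ^ i * y ^ j) G"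
    using add.hyps by (simp add: tmult_def fun_eq_iff cvsD[OF assms(1)] tcar_mem[OF assms(1)])
  then show ?case using tcar_add[OF assms(1) add.IH] by (simp only:)
qed

inductive poly_fun :: "(complex \<times> complex \<Rightarrow> complex) \<Rightarrow> bool" where
  poly_fun_const: "poly_fun (\<lambda>_. c)"
| poly_fun_fst: "poly_fun fst"
| poly_fun_snd: "poly_fun snd"
| poly_fun_add: "poly_fun P \<Longrightarrow> poly_fun Q \<Longrightarrow> poly_fun (\<lambda>p. P p + Q p)"
| poly_fun_diff: "poly_fun P \<Longrightarrow> poly_fun Q \<Longrightarrow> poly_fun (\<lambda>p. P p - Q p)"
| poly_fun_mult: "poly_fun P \<Longrightarrow> poly_fun Q \<Longrightarrow> poly_fun (\<lambda>p. P p * Q p)"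

lemma tcar_tmult:
  assumes "cvs s V" "poly_fun P" "F \<in> tcar s V"
  shows "tmult s P F \<in> tcar s V"
  using assms(2,3)
proof (induction arbitrary: F)
  case (poly_fun_const c)
  then show ?case using tcar_scale[OF assms(1)] by (simp add: tmult_def tsmul_def)
next
  case poly_fun_fst
  have "(\<lambda>(x, y). x ^ 1 * y ^ 0) = (fst :: complex \<times> complex \<Rightarrow> complex)" by (simp add: fun_eq_iff)
  then show ?case using tcar_tmult_monomial[OF assms(1) poly_fun_fst, of 1 0] by simp
next
  case poly_fun_snd
  have "(\<lambda>(x, y). x ^ 0 * y ^ 1) = (snd :: complex \<times> complex \<Rightarrow> complex)" by (simp add: fun_eq_iff)
  then show ?case using tcar_tmult_monomial[OF assms(1) poly_fun_snd, of 0 1] by simp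
next
  case (poly_fun_add P Q)
  have "tmult s (\<lambda>p. P p + Q p) F = tmult s P F + tmult s Q F"
    using poly_fun_add.prems by (simp add: tmult_def fun_eq_iff cvsD[OF assms(1)] tcar_mem[OF assms(1)])
  then show ?case using tcar_add[OF assms(1)] poly_fun_add by (simp only:)
next
  case (poly_fun_diff P Q)
  have "tmult s (\<lambda>p. P p - Q p) F = tmult s P F + tsmul s (- 1) (tmult s Q F)"
    using poly_fun_diff.prems
    by (simp add: tmult_def tsmul_def fun_eq_iff cvsD[OF assms(1)] tcar_mem[OF assms(1)]
        cvs_scale_diff_left[OF assms(1)] cvs_scale_minus_left[OF assms(1)])
  then show ?case using tcar_add[OF assms(1)] tcar_scale[OF assms(1)] poly_fun_diff by (simp only:)
next
  case (poly_fun_mult P Q)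
  have "tmult s (\<lambda>p. P p * Q p) F = tmult s P (tmult s Q F)"
    using poly_fun_mult.prems by (simp add: tmult_def fun_eq_iff cvsD[OF assms(1)] tcar_mem[OF assms(1)])
  then show ?case using poly_fun_mult by simp
qed

lemma cvs_linear_tmult:
  "cvs s V \<Longrightarrow> poly_fun P \<Longrightarrow> cvs_linear (tsmul s) (tcar s V) (tsmul s) (tcar s V) (tmult s P)"
  unfolding cvs_linear_def
  by (simp add: tcar_tmult) (simp add: tmult_def tsmul_def fun_eq_iff cvsD tcar_mem mult.commute)

lemma cvs_linear_eval: "cvs s V \<Longrightarrow> cvs_linear (tsmul s) (tcar s V) s V (\<lambda>F. F p)"
  unfolding cvs_linear_def by (simp add: tcar_mem tsmul_def)

lemma cvs_linear_pointwise:
  assumes "cvs s1 V1" "cvs s2 V2" "cvs_linear s1 V1 s2 V2 g"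
  shows "cvs_linear (tsmul s1) (tcar s1 V1) (tsmul s2) (tcar s2 V2) (\<lambda>F p. g (F p))"
  using tcar_pointwise[OF assms] cvs_linearD[OF assms(3)] tcar_mem[OF assms(1)]
  unfolding cvs_linear_def tsmul_def by (simp add: fun_eq_iff)

lemma cvs_linear_const: "cvs s V \<Longrightarrow> cvs_linear s V (tsmul s) (tcar s V) (\<lambda>v _. v)"
  unfolding cvs_linear_def by (simp add: tcar_const tsmul_def plus_fun_def)

lemma tmonomial_decompose:
  assumes "cvs s V" "v \<in> V"
  shows "\<exists>c. \<exists>A\<in>tcar s V. \<exists>B\<in>tcar s V. tmonomial s a b v = (\<lambda>_. c) + tmult s fst A + tmult s snd B"
proof (cases a)
  case (Suc a')
  then have "tmonomial s a b v = (\<lambda>_. 0) + tmult s fst (tmonomial s a' b v) + tmult s snd 0"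
    using assms by (simp add: tmonomial_def tmult_def fun_eq_iff cvsD[OF assms(1)]
        cvs_scale_zero_right[OF assms(1)] mult.assoc)
  then show ?thesis using tcar_tmonomial[OF assms(2)] tcar_zero by blast
next
  case 0
  show ?thesis
  proof (cases b)
    case (Suc b')
    then have "tmonomial s a b v = (\<lambda>_. 0) + tmult s fst 0 + tmult s snd (tmonomial s a b' v)"
      using assms 0 by (simp add: tmonomial_def tmult_def fun_eq_iff cvsD[OF assms(1)]
          cvs_scale_zero_right[OF assms(1)])
    then show ?thesis using tcar_tmonomial[OF assms(2)] tcar_zero by blast
  next
    case b0: 0
    then have "tmonomial s a b v = (\<lambda>_. v) + tmult s fst 0 + tmult s snd 0"
      using 0 assms by (simp add: tmonomial_def tmult_def fun_eq_iff cvsD(7)[OF assms(1)]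
          cvs_scale_zero_right[OF assms(1)])
    then show ?thesis using tcar_zero by blast
  qed
qed

lemma tcar_decompose:
  assumes "cvs s V" "F \<in> tcar s V"
  obtains A B where "A \<in> tcar s V" "B \<in> tcar s V" "F = (\<lambda>_. F (0, 0)) + tmult s fst A + tmult s snd B"
proof -
  have lin: "cvs_linear (tsmul s) (tcar s V) (tsmul s) (tcar s V) (tmult s P)" if "poly_fun P" for P
    by (rule cvs_linear_tmult[OF assms(1) that])
  have "\<exists>c. \<exists>A\<in>tcar s V. \<exists>B\<in>tcar s V. F = (\<lambda>_. c) + tmult s fst A + tmult s snd B"
    using assms(2)
  proof (induction rule: tcar_induct)
    case zero
    show ?case
      by (intro exI[of _ 0] bexI[OF _ tcar_zero]) (simp add: fun_eq_iff tmult_def cvs_scale_zero_right[OF assms(1)])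
  next
    case (monomial a b v)
    then show ?case by (rule tmonomial_decompose[OF assms(1)])
  next
    case (add F G)
    then obtain c1 c2 A1 B1 A2 B2 where AB: "A1 \<in> tcar s V" "B1 \<in> tcar s V" "A2 \<in> tcar s V" "B2 \<in> tcar s V"
      "F = (\<lambda>_. c1) + tmult s fst A1 + tmult s snd B1"
      "G = (\<lambda>_. c2) + tmult s fst A2 + tmult s snd B2"
      by blast
    have "F + G = (\<lambda>_. c1 + c2) + tmult s fst (A1 + A2) + tmult s snd (B1 + B2)"
      unfolding AB(5,6) cvs_linearD(2)[OF lin[OF poly_fun_fst] AB(1,3)]
        cvs_linearD(2)[OF lin[OF poly_fun_snd] AB(2,4)]
      by (simp add: fun_eq_iff ac_simps)
    then show ?case using AB tcar_add[OF assms(1)] by blast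
  qed
  then obtain c A B where AB: "A \<in> tcar s V" "B \<in> tcar s V" "F = (\<lambda>_. c) + tmult s fst A + tmult s snd B"
    by blast
  moreover have "F (0, 0) = c"
    unfolding AB(3) using cvs_scale_zero_left[OF assms(1) tcar_mem[OF assms(1) AB(1)]]
      cvs_scale_zero_left[OF assms(1) tcar_mem[OF assms(1) AB(2)]] by (simp add: tmult_def)
  ultimately show ?thesis by (intro that[OF AB(1,2)]) (simp only:)
qed

lemma gmodD:
  assumes "gmod s V \<rho>"
  shows "cvs s V" "cvs_linear s V s V (\<rho> e)"
  using assms unfolding gmod_def cvs_linear_def by blast+

lemma tcar_restricted:
  assumes "gmod s V \<rho>" "restricted_gmod V \<rho>" "F \<in> tcar s V"
  shows "\<exists>N. \<forall>k>N. \<forall>e\<in>{L k, H k, I k, J k}. \<forall>p. \<rho> e (F p) = 0"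
  using assms(3)
proof (induction rule: tcar_induct)
  case zero
  then show ?case using cvs_linear_zero[OF gmodD(1,2)[OF assms(1)]] by simp
next
  case (monomial a b v)
  then obtain N :: nat where "\<forall>k>int N. \<forall>e\<in>{L k, H k, I k, J k}. \<rho> e v = 0"
    using assms(2) unfolding restricted_gmod_def by fastforce
  then show ?case
    using cvs_linearD(3)[OF gmodD(2)[OF assms(1)] monomial] cvs_scale_zero_right[OF gmodD(1)[OF assms(1)]]
    by (intro exI[of _ "int N"]) (auto simp: tmonomial_def case_prod_beta)
next
  case (add F G)
  then obtain M N where MN: "\<forall>k>M. \<forall>e\<in>{L k, H k, I k, J k}. \<forall>p. \<rho> e (F p) = 0"
    "\<forall>k>N. \<forall>e\<in>{L k, H k, I k, J k}. \<forall>p. \<rho> e (G p) = 0" by blast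
  show ?case
  proof (intro exI[of _ "max M N"] allI impI ballI)
    fix k e p assume k: "max M N < k" and e: "e \<in> {L k, H k, I k, J k}"
    from k have "M < k" "N < k" by simp_all
    then have "\<rho> e (F p) = 0" "\<rho> e (G p) = 0" using MN e by blast+
    then show "\<rho> e ((F + G) p) = 0"
      using cvs_linearD(2)[OF gmodD(2)[OF assms(1)] tcar_mem[OF gmodD(1)[OF assms(1)] add(1)]
          tcar_mem[OF gmodD(1)[OF assms(1)] add(2)]] by simp
  qed
qed

lemma poly_seq_tmult:
  assumes "cvs s V" "poly_fun P" "poly_fun Q" "poly_seq (tsmul s) (tcar s V) G"
  shows "poly_seq (tsmul s) (tcar s V) (\<lambda>k. tmult s (\<lambda>p. P p + of_int k * Q p) (G k))"
proof -
  have eq: "tmult s (\<lambda>p. P p + of_int k * Q p) (G k) = tmult s P (G k) + tsmul s (of_int k) (tmult s Q (G k))" for k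
    using tcar_mem[OF assms(1) poly_seq_mem[OF cvs_tcar[OF assms(1)] assms(4)]]
    by (simp add: tmult_def tsmul_def fun_eq_iff cvsD[OF assms(1)])
  have lin: "poly_seq (tsmul s) (tcar s V) (\<lambda>k. tmult s R (G k))" if "poly_fun R" for R
    by (rule poly_seq_linear_image[OF cvs_tcar[OF assms(1)] cvs_linear_tmult[OF assms(1) that] assms(4)])
  have "poly_seq (tsmul s) (tcar s V) (\<lambda>k. tmult s P (G k) + tsmul s (of_int k) (tmult s Q (G k)))"
    by (rule poly_seq_add[OF lin[OF assms(2)] poly_seq_times[OF lin[OF assms(3)]]])
  then show ?thesis by (simp only: eq)
qed

lemma poly_seq_tshift_tmonomial:
  assumes "cvs s V" "v \<in> V"
  shows "poly_seq (tsmul s) (tcar s V) (\<lambda>k. tshift (a + of_int k * c) (b + of_int k * d) (tmonomial s i j v))"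
proof -
  define M where "M i j k = (\<lambda>(x, y). s ((x - (a + of_int k * c)) ^ i * (y - (b + of_int k * d)) ^ j) v)"
    for i j :: nat and k :: int
  have M0: "poly_seq (tsmul s) (tcar s V) (M 0 j)" for j
  proof (induction j)
    case 0
    have "M 0 0 = (\<lambda>k _. v)" by (simp add: M_def fun_eq_iff cvsD(7)[OF assms])
    then show ?case using poly_seq_const[OF tcar_const[OF assms]] by simp
  next
    case (Suc j)
    have "M 0 (Suc j) = (\<lambda>k. tmult s (\<lambda>p. (snd p - b) + of_int k * (- d)) (M 0 j k))"
      by (simp add: M_def tmult_def fun_eq_iff case_prod_beta cvsD(6)[OF assms] mult_ac diff_diff_eq)
    moreover have "poly_fun (\<lambda>p. snd p - b)" by (intro poly_fun.intros)
    ultimately show ?case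
      using poly_seq_tmult[OF assms(1) _ poly_fun_const Suc] by (simp only:)
  qed
  have "poly_seq (tsmul s) (tcar s V) (M i j)"
  proof (induction i)
    case (Suc i)
    have "M (Suc i) j = (\<lambda>k. tmult s (\<lambda>p. (fst p - a) + of_int k * (- c)) (M i j k))"
      by (simp add: M_def tmult_def fun_eq_iff case_prod_beta cvsD(6)[OF assms] mult_ac diff_diff_eq)
    moreover have "poly_fun (\<lambda>p. fst p - a)" by (intro poly_fun.intros)
    ultimately show ?case
      using poly_seq_tmult[OF assms(1) _ poly_fun_const Suc] by (simp only:)
  qed (rule M0)
  moreover have "tshift (a + of_int k * c) (b + of_int k * d) (tmonomial s i j v) = M i j k" for k
    by (simp add: tshift_def tmonomial_def M_def fun_eq_iff)
  ultimately show ?thesis by simp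
qed

lemma poly_seq_tshift:
  assumes "cvs s V" "F \<in> tcar s V"
  shows "poly_seq (tsmul s) (tcar s V) (\<lambda>k. tshift (a + of_int k * c) (b + of_int k * d) F)"
  using assms(2)
proof (induction rule: tcar_induct)
  case zero
  have shift_zero: "(\<lambda>k. tshift (a + of_int k * c) (b + of_int k * d) 0) = (\<lambda>k. 0)"
    by (simp add: tshift_def fun_eq_iff)
  show ?case by (subst shift_zero) (rule poly_seq_const[OF tcar_zero])
next
  case (monomial i j v)
  then show ?case by (rule poly_seq_tshift_tmonomial[OF assms(1)])
next
  case (add F G)
  have "tshift x y (F + G) = tshift x y F + tshift x y G" for x y
    by (simp add: tshift_def fun_eq_iff)
  then show ?case using poly_seq_add[OF add.IH] by (simp only:)
qed

lemma tcar_tshift: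
  assumes "cvs s V" "F \<in> tcar s V"
  shows "tshift a b F \<in> tcar s V"
proof -
  have "poly_seq (tsmul s) (tcar s V) (\<lambda>k. tshift (a + of_int k * 0) (b + of_int k * 0) F)"
    by (rule poly_seq_tshift[OF assms])
  from poly_seq_mem[OF cvs_tcar[OF assms(1)] this, of 0] show ?thesis by simp
qed

lemma tshift_const: "tshift a b (\<lambda>_. v) = (\<lambda>_. v)"
  by (simp add: tshift_def fun_eq_iff)

lemma tshift_zero: "tshift 0 0 F = F"
  by (simp add: tshift_def)

lemma tshift_tshift: "tshift a b (tshift a' b' F) = tshift (a + a') (b + b') F"
  by (simp add: tshift_def fun_eq_iff diff_diff_eq add.commute)

lemma tshift_tsmul: "tshift a b (tsmul s c F) = tsmul s c (tshift a b F)"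
  by (simp add: tshift_def tsmul_def fun_eq_iff)

text \<open>The action on the factor \<open>\<Omega>\<close>: \<open>eps = 1\<close> gives \<open>\<Omega>(\<lambda>,\<eta>,\<sigma>,0)\<close> and \<open>eps = -1\<close> gives \<open>\<Omega>(\<lambda>,\<eta>,0,\<sigma>)\<close>.\<close>
definition omega_part :: "(complex \<Rightarrow> 'v::ab_group_add \<Rightarrow> 'v) \<Rightarrow> complex \<Rightarrow> complex \<Rightarrow> complex \<Rightarrow> complex
    \<Rightarrow> gbasis \<Rightarrow> (complex \<times> complex \<Rightarrow> 'v) \<Rightarrow> complex \<times> complex \<Rightarrow> 'v" where
  "omega_part s lam eta sig eps e F = (\<lambda>(x, y). case e of
       L m \<Rightarrow> s (lam powi m * (y - eps * of_int m * x + of_int m * eta)) (F (x, y - of_int m))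
     | H m \<Rightarrow> s (lam powi m * x) (F (x, y - of_int m))
     | I m \<Rightarrow> if eps = 1 then s (lam powi m * sig) (F (x - eps, y - of_int m)) else 0
     | J m \<Rightarrow> if eps = 1 then 0 else s (lam powi m * sig) (F (x - eps, y - of_int m))
     | _ \<Rightarrow> 0)"

definition omega_tensor :: "(complex \<Rightarrow> 'v::ab_group_add \<Rightarrow> 'v) \<Rightarrow> (gbasis \<Rightarrow> 'v \<Rightarrow> 'v)
    \<Rightarrow> complex \<Rightarrow> complex \<Rightarrow> complex \<Rightarrow> complex \<Rightarrow> gbasis \<Rightarrow> (complex \<times> complex \<Rightarrow> 'v) \<Rightarrow> complex \<times> complex \<Rightarrow> 'v" where
  "omega_tensor s \<rho> lam eta sig eps e F = omega_part s lam eta sig eps e F + (\<lambda>p. \<rho> e (F p))"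

lemma omegaA_tensor_eq: "omegaA_tensor s \<rho> lam eta sig = omega_tensor s \<rho> lam eta sig 1"
  by (auto simp: fun_eq_iff omegaA_tensor_def omega_tensor_def omega_part_def split: gbasis.split)

lemma omegaB_tensor_eq: "omegaB_tensor s \<rho> lam eta sig = omega_tensor s \<rho> lam eta sig (- 1)"
  by (auto simp: fun_eq_iff omegaB_tensor_def omega_tensor_def omega_part_def split: gbasis.split)

definition sigma_gen :: "complex \<Rightarrow> int \<Rightarrow> gbasis" where
  "sigma_gen eps k = (if eps = 1 then I k else J k)"

lemma omega_part_H:
  "cvs s V \<Longrightarrow> F \<in> tcar s V \<Longrightarrow>
    omega_part s lam eta sig eps (H k) F = tsmul s (lam powi k) (tmult s fst (tshift 0 (of_int k) F))"
  by (simp add: omega_part_def tsmul_def tmult_def tshift_def fun_eq_iff cvsD(6) tcar_mem)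

lemma omega_part_L:
  "cvs s V \<Longrightarrow> F \<in> tcar s V \<Longrightarrow>
    omega_part s lam eta sig eps (L k) F = tsmul s (lam powi k)
      (tmult s (\<lambda>p. snd p - eps * of_int k * fst p + of_int k * eta) (tshift 0 (of_int k) F))"
  by (simp add: omega_part_def tsmul_def tmult_def tshift_def fun_eq_iff cvsD(6) tcar_mem)

lemma omega_part_sigma_gen:
  "cvs s V \<Longrightarrow> F \<in> tcar s V \<Longrightarrow>
    omega_part s lam eta sig eps (sigma_gen eps k) F = tsmul s (lam powi k) (tsmul s sig (tshift eps (of_int k) F))"
  by (simp add: omega_part_def sigma_gen_def tsmul_def tshift_def fun_eq_iff cvsD(6) tcar_mem)

lemma omega_part_other:
  assumes "eps = 1 \<or> eps = - 1" "\<forall>k. e \<noteq> H k \<and> e \<noteq> L k \<and> e \<noteq> sigma_gen eps k"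
  shows "omega_part s lam eta sig eps e F = 0"
  using assms unfolding omega_part_def sigma_gen_def by (cases e) (auto simp: fun_eq_iff)

lemma poly_seq_omega_H:
  assumes "cvs s V" "F \<in> tcar s V"
  shows "poly_seq (tsmul s) (tcar s V) (\<lambda>k. tmult s fst (tshift 0 (of_int k) F))"
  using poly_seq_linear_image[OF cvs_tcar[OF assms(1)] cvs_linear_tmult[OF assms(1) poly_fun_fst]
      poly_seq_tshift[OF assms, of 0 0 0 1]] by simp

lemma poly_seq_omega_L:
  assumes "cvs s V" "F \<in> tcar s V"
  shows "poly_seq (tsmul s) (tcar s V)
    (\<lambda>k. tmult s (\<lambda>p. snd p - eps * of_int k * fst p + of_int k * eta) (tshift 0 (of_int k) F))"
proof -
  have eq: "(\<lambda>p. snd p - eps * of_int k * fst p + of_int k * eta) = (\<lambda>p. snd p + of_int k * (eta - eps * fst p))"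
    for k by (simp add: fun_eq_iff algebra_simps)
  have "poly_fun (\<lambda>p. eta - eps * fst p)" by (intro poly_fun.intros)
  from poly_seq_tmult[OF assms(1) poly_fun_snd this poly_seq_tshift[OF assms, of 0 0 0 1]]
  show ?thesis unfolding eq by (simp only: mult_zero_right add_0 mult_1_right)
qed

lemma poly_seq_omega_sigma_gen:
  assumes "cvs s V" "F \<in> tcar s V"
  shows "poly_seq (tsmul s) (tcar s V) (\<lambda>k. tsmul s sig (tshift eps (of_int k) F))"
  using poly_seq_linear_image[OF cvs_tcar[OF assms(1)] cvs_linear_scale[OF cvs_tcar[OF assms(1)]]
      poly_seq_tshift[OF assms, of eps 0 0 1]] by simp

lemma gbasis_omega_cases:
  obtains (H) k where "e = H k" | (L) k where "e = L k" | (sigma) k where "e = sigma_gen eps k"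
    | (other) "\<forall>k. e \<noteq> H k \<and> e \<noteq> L k \<and> e \<noteq> sigma_gen eps k"
  by blast

lemma tcar_omega_part:
  assumes "cvs s V" "F \<in> tcar s V" "eps = 1 \<or> eps = - 1"
  shows "omega_part s lam eta sig eps e F \<in> tcar s V"
proof -
  have shift: "tshift a b F \<in> tcar s V" for a b by (rule tcar_tshift[OF assms(1,2)])
  have pf: "poly_fun (\<lambda>p. snd p - eps * of_int k * fst p + of_int k * eta)" for k
    by (intro poly_fun.intros)
  show ?thesis
  proof (cases rule: gbasis_omega_cases[where e = e and eps = eps])
    case (H k)
    then show ?thesis
      by (simp add: omega_part_H[OF assms(1,2)] tcar_scale[OF assms(1)] tcar_tmult[OF assms(1) poly_fun_fst shift])
  next
    case (L k)
    then show ?thesis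
      by (simp add: omega_part_L[OF assms(1,2)] tcar_scale[OF assms(1) tcar_tmult[OF assms(1) pf shift]])
  next
    case (sigma k)
    then show ?thesis
      by (simp add: omega_part_sigma_gen[OF assms(1,2)] tcar_scale[OF assms(1)] shift)
  qed (simp add: omega_part_other[OF assms(3)] tcar_zero)
qed

lemma omega_part_pointwise:
  assumes "cvs s1 V1" "cvs_linear s1 V1 s2 V2 g" "\<And>p. F p \<in> V1"
  shows "g (omega_part s1 lam eta sig eps e F p) = omega_part s2 lam eta sig eps e (\<lambda>p. g (F p)) p"
  using cvs_linearD(3)[OF assms(2) assms(3)] cvs_linear_zero[OF assms(1,2)]
  by (cases e) (auto simp: omega_part_def case_prod_beta)

lemma omega_part_mem:
  assumes "cvs s V" "\<And>p. F p \<in> V"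
  shows "omega_part s lam eta sig eps e F p \<in> V"
  using cvsD(1,3)[OF assms(1)] assms(2) by (cases e) (auto simp: omega_part_def case_prod_beta)

section \<open>Homomorphisms between tensor modules\<close>

lemma gmod_iso_iff:
  "gmod_iso s1 V1 \<rho>1 s2 V2 \<rho>2 \<longleftrightarrow> (\<exists>\<phi>. bij_betw \<phi> V1 V2 \<and> cvs_linear s1 V1 s2 V2 \<phi>
     \<and> (\<forall>e. \<forall>x\<in>V1. \<phi> (\<rho>1 e x) = \<rho>2 e (\<phi> x)))"
  unfolding gmod_iso_def cvs_linear_def by (auto dest: bij_betwE)

locale omega_tensor_hom =
  fixes sR :: "complex \<Rightarrow> 'v::ab_group_add \<Rightarrow> 'v" and VR :: "'v set" and \<rho>R :: "gbasis \<Rightarrow> 'v \<Rightarrow> 'v"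
    and lam eta sig eps :: complex
    and sS :: "complex \<Rightarrow> 'w::ab_group_add \<Rightarrow> 'w" and VS :: "'w set" and \<rho>S :: "gbasis \<Rightarrow> 'w \<Rightarrow> 'w"
    and lam1 eta1 sig1 eps1 :: complex
    and \<phi> :: "(complex \<times> complex \<Rightarrow> 'v) \<Rightarrow> complex \<times> complex \<Rightarrow> 'w"
  assumes gmod_R: "gmod sR VR \<rho>R" and restricted_R: "restricted_gmod VR \<rho>R"
    and gmod_S: "gmod sS VS \<rho>S" and restricted_S: "restricted_gmod VS \<rho>S"
    and linear: "cvs_linear (tsmul sR) (tcar sR VR) (tsmul sS) (tcar sS VS) \<phi>"
    and intertwines: "\<And>e F. F \<in> tcar sR VR \<Longrightarrow>
      \<phi> (omega_tensor sR \<rho>R lam eta sig eps e F) = omega_tensor sS \<rho>S lam1 eta1 sig1 eps1 e (\<phi> F)"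
begin

lemma cvs_R: "cvs sR VR" and cvs_S: "cvs sS VS"
  using gmodD(1) gmod_R gmod_S by blast+

lemma cvs_tcar_R: "cvs (tsmul sR) (tcar sR VR)" and cvs_tcar_S: "cvs (tsmul sS) (tcar sS VS)"
  using cvs_tcar cvs_R cvs_S by blast+

lemma phi_mem: "F \<in> tcar sR VR \<Longrightarrow> \<phi> F \<in> tcar sS VS"
  using cvs_linearD(1)[OF linear] .

lemma phi_zero: "\<phi> 0 = 0"
  using cvs_linear_zero[OF cvs_tcar_R linear] .

text \<open>Far out in the grading, \<open>R\<close> and \<open>S\<close> are annihilated and only the \<open>\<Omega>\<close>-parts of the actions remain.\<close>
lemma omega_part_intertwines_eventually:
  assumes "F \<in> tcar sR VR"
  shows "\<exists>N. \<forall>k>N. \<forall>e\<in>{L k, H k, I k, J k}.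
    \<phi> (omega_part sR lam eta sig eps e F) = omega_part sS lam1 eta1 sig1 eps1 e (\<phi> F)"
proof -
  obtain M where M: "\<forall>k>M. \<forall>e\<in>{L k, H k, I k, J k}. \<forall>p. \<rho>R e (F p) = 0"
    using tcar_restricted[OF gmod_R restricted_R assms] by blast
  obtain N where N: "\<forall>k>N. \<forall>e\<in>{L k, H k, I k, J k}. \<forall>p. \<rho>S e (\<phi> F p) = 0"
    using tcar_restricted[OF gmod_S restricted_S phi_mem[OF assms]] by blast
  have "\<phi> (omega_part sR lam eta sig eps e F) = omega_part sS lam1 eta1 sig1 eps1 e (\<phi> F)"
    if "k > max M N" "e \<in> {L k, H k, I k, J k}" for k e
  proof -
    have "(\<lambda>p. \<rho>R e (F p)) = 0" "(\<lambda>p. \<rho>S e (\<phi> F p)) = 0"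
      using M N that by (auto simp: fun_eq_iff)
    then show ?thesis
      using intertwines[OF assms, of e] by (simp add: omega_tensor_def)
  qed
  then show ?thesis by blast
qed

text \<open>For large \<open>k\<close> the generator \<open>J\<^sub>k\<close> kills the constants of \<open>\<Omega>(\<lambda>,\<eta>,\<sigma>,0) \<otimes> R\<close>,
  while on \<open>\<Omega>(\<lambda>\<^sub>1,\<eta>\<^sub>1,0,\<sigma>\<^sub>1) \<otimes> S\<close> it acts by an invertible shift.\<close>
lemma phi_const_eq_zero:
  assumes "eps = 1" "eps1 = - 1" "lam1 \<noteq> 0" "sig1 \<noteq> 0" "v \<in> VR"
  shows "\<phi> (\<lambda>_. v) = 0"
proof -
  define G where "G = \<phi> (\<lambda>_. v)"
  have C: "(\<lambda>_. v) \<in> tcar sR VR" by (rule tcar_const[OF cvs_R assms(5)])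
  have G: "G \<in> tcar sS VS" unfolding G_def by (rule phi_mem[OF C])
  obtain N where N: "\<forall>k>N. \<forall>e\<in>{L k, H k, I k, J k}.
      \<phi> (omega_part sR lam eta sig eps e (\<lambda>_. v)) = omega_part sS lam1 eta1 sig1 eps1 e G"
    unfolding G_def using omega_part_intertwines_eventually[OF C] by blast
  define k where "k = N + 1"
  have "omega_part sR lam eta sig eps (J k) (\<lambda>_. v) = 0"
    using assms(1) by (simp add: omega_part_def fun_eq_iff)
  then have "tsmul sS (lam1 powi k) (tsmul sS sig1 (tshift eps1 (of_int k) G)) = 0"
    using N[rule_format, of k "J k"] phi_zero omega_part_sigma_gen[OF cvs_S G, of lam1 eta1 sig1 eps1 k] assms(2)
    unfolding k_def by (simp add: sigma_gen_def)
  then have "tshift eps1 (of_int k) G = 0"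
    using cvs_scale_cancel[OF cvs_tcar_S] tcar_scale[OF cvs_S] tcar_tshift[OF cvs_S G] assms(3,4)
    by (metis power_int_eq_0_iff)
  then have "G = 0"
    using tshift_tshift[of "- eps1" "- of_int k" eps1 "of_int k" G] tshift_zero[of G]
    by (simp add: tshift_def fun_eq_iff)
  then show ?thesis unfolding G_def .
qed

end

locale omega_tensor_iso = omega_tensor_hom sR VR \<rho>R lam eta sig eps sS VS \<rho>S lam1 eta1 sig1 eps \<phi>
  for sR :: "complex \<Rightarrow> 'v::ab_group_add \<Rightarrow> 'v" and VR \<rho>R lam eta sig eps
    and sS :: "complex \<Rightarrow> 'w::ab_group_add \<Rightarrow> 'w" and VS \<rho>S lam1 eta1 sig1 \<phi> +
  assumes bij: "bij_betw \<phi> (tcar sR VR) (tcar sS VS)"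
    and eps: "eps = 1 \<or> eps = - 1"
    and nonzero: "lam \<noteq> 0" "lam1 \<noteq> 0" "sig \<noteq> 0" "sig1 \<noteq> 0" "VR \<noteq> {0}"
begin

lemma phi_eq_zero_iff: "F \<in> tcar sR VR \<Longrightarrow> \<phi> F = 0 \<longleftrightarrow> F = 0"
  using bij_betw_imp_inj_on[OF bij] tcar_zero phi_zero by (metis inj_onD)

lemma phi_surj: "G \<in> tcar sS VS \<Longrightarrow> \<exists>F\<in>tcar sR VR. \<phi> F = G"
  using bij_betw_imp_surj_on[OF bij] by (metis imageE)

lemma nonzero_constE: obtains v where "v \<in> VR" "v \<noteq> 0" "(\<lambda>_. v) \<in> tcar sR VR" "\<phi> (\<lambda>_. v) \<noteq> 0"
proof -
  obtain v where v: "v \<in> VR" "v \<noteq> 0" using nonzero(5) cvsD(1)[OF cvs_R] by blast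
  moreover have "(\<lambda>_. v) \<in> tcar sR VR" by (rule tcar_const[OF cvs_R v(1)])
  moreover have "(\<lambda>_. v) \<noteq> 0" using v(2) by (simp add: fun_eq_iff)
  ultimately show ?thesis using that phi_eq_zero_iff by blast
qed

text \<open>Compare the actions of \<open>H\<^sub>k\<close>, \<open>k \<gg> 0\<close>, on the image of a constant: one side grows like
  \<open>\<lambda>\<^sup>k\<close>, the other like \<open>\<lambda>\<^sub>1\<^sup>k\<close> times a polynomial in \<open>k\<close>.\<close>
lemma lam_eq: "lam = lam1"
proof -
  obtain v where v: "v \<in> VR" "v \<noteq> 0" and C: "(\<lambda>_. v) \<in> tcar sR VR"
    using nonzero_constE by blast
  define G where "G = \<phi> (\<lambda>_. v)"
  define U where "U = \<phi> (tmult sR fst (\<lambda>_. v))"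
  have G: "G \<in> tcar sS VS" unfolding G_def by (rule phi_mem[OF C])
  have XC: "tmult sR fst (\<lambda>_. v) \<in> tcar sR VR" by (rule tcar_tmult[OF cvs_R poly_fun_fst C])
  have U: "U \<in> tcar sS VS" unfolding U_def by (rule phi_mem[OF XC])
  have "tmult sR fst (\<lambda>_. v) (1, 0) \<noteq> 0"
    using v cvsD(7)[OF cvs_R] by (simp add: tmult_def)
  then have "tmult sR fst (\<lambda>_. v) \<noteq> 0" by (metis zero_fun_apply)
  then have "U \<noteq> 0" unfolding U_def using phi_eq_zero_iff[OF XC] by blast
  obtain N where N: "\<forall>k>N. \<forall>e\<in>{L k, H k, I k, J k}.
      \<phi> (omega_part sR lam eta sig eps e (\<lambda>_. v)) = omega_part sS lam1 eta1 sig1 eps e G"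
    unfolding G_def using omega_part_intertwines_eventually[OF C] by blast
  have "tmult sS fst (tshift 0 (of_int k) G) = tsmul sS (lam powi k / lam1 powi k) U" if "k > N" for k
  proof (rule cvs_scale_solve[OF cvs_tcar_S _ U])
    show "tmult sS fst (tshift 0 (of_int k) G) \<in> tcar sS VS"
      by (rule tcar_tmult[OF cvs_S poly_fun_fst tcar_tshift[OF cvs_S G]])
    show "lam1 powi k \<noteq> 0" using nonzero(2) by simp
    show "tsmul sS (lam1 powi k) (tmult sS fst (tshift 0 (of_int k) G)) = tsmul sS (lam powi k) U"
      using N[rule_format, OF that, of "H k"] cvs_linearD(3)[OF linear XC, of "lam powi k"]
      by (simp add: omega_part_H[OF cvs_R C] omega_part_H[OF cvs_S G] tshift_const U_def)
  qed
  then have "lam / lam1 = 1"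
    using poly_seq_eventually_geometric[OF cvs_tcar_S poly_seq_omega_H[OF cvs_S G] U \<open>U \<noteq> 0\<close>,
        of "lam / lam1" N] nonzero(1,2)
    by (simp add: power_int_divide_distrib)
  then show ?thesis using nonzero(2) by simp
qed

text \<open>Once \<open>\<lambda> = \<lambda>\<^sub>1\<close>, an identity between polynomial sequences that holds for \<open>k \<gg> 0\<close> holds for all \<open>k\<close>.\<close>
lemma phi_omega_seq:
  assumes "\<And>k. e k \<in> {L k, H k, I k, J k}"
    and "\<And>k F. F \<in> tcar sR VR \<Longrightarrow> omega_part sR lam eta sig eps (e k) F = tsmul sR (lam powi k) (\<Omega>R k F)"
    and "\<And>k G. G \<in> tcar sS VS \<Longrightarrow> omega_part sS lam1 eta1 sig1 eps (e k) G = tsmul sS (lam1 powi k) (\<Omega>S k G)"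
    and "\<And>F. F \<in> tcar sR VR \<Longrightarrow> poly_seq (tsmul sR) (tcar sR VR) (\<lambda>k. \<Omega>R k F)"
    and "\<And>G. G \<in> tcar sS VS \<Longrightarrow> poly_seq (tsmul sS) (tcar sS VS) (\<lambda>k. \<Omega>S k G)"
    and F: "F \<in> tcar sR VR"
  shows "\<phi> (\<Omega>R k F) = \<Omega>S k (\<phi> F)"
proof -
  have seqR: "poly_seq (tsmul sS) (tcar sS VS) (\<lambda>k. \<phi> (\<Omega>R k F))"
    by (rule poly_seq_linear_image[OF cvs_tcar_R linear assms(4)[OF F]])
  have seqS: "poly_seq (tsmul sS) (tcar sS VS) (\<lambda>k. \<Omega>S k (\<phi> F))"
    by (rule assms(5)[OF phi_mem[OF F]])
  obtain N where N: "\<forall>k>N. \<forall>e\<in>{L k, H k, I k, J k}.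
      \<phi> (omega_part sR lam eta sig eps e F) = omega_part sS lam1 eta1 sig1 eps e (\<phi> F)"
    using omega_part_intertwines_eventually[OF F] by blast
  have "\<phi> (\<Omega>R k F) = \<Omega>S k (\<phi> F)" if "k > N" for k
  proof (rule cvs_scale_right_cancel[OF cvs_tcar_S poly_seq_mem[OF cvs_tcar_S seqR]
        poly_seq_mem[OF cvs_tcar_S seqS]])
    show "lam powi k \<noteq> 0" using nonzero(1) by simp
    have "tsmul sS (lam powi k) (\<phi> (\<Omega>R k F)) = \<phi> (omega_part sR lam eta sig eps (e k) F)"
      using cvs_linearD(3)[OF linear poly_seq_mem[OF cvs_tcar_R assms(4)[OF F]]] assms(2)[OF F] by simp
    also have "\<dots> = omega_part sS lam1 eta1 sig1 eps (e k) (\<phi> F)"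
      using N that assms(1) by blast
    finally show "tsmul sS (lam powi k) (\<phi> (\<Omega>R k F)) = tsmul sS (lam powi k) (\<Omega>S k (\<phi> F))"
      using assms(3)[OF phi_mem[OF F]] lam_eq by simp
  qed
  then show ?thesis by (rule poly_seq_eventually_eq[OF cvs_tcar_S seqR seqS])
qed

lemma phi_omega_H:
  "F \<in> tcar sR VR \<Longrightarrow> \<phi> (tmult sR fst (tshift 0 (of_int k) F)) = tmult sS fst (tshift 0 (of_int k) (\<phi> F))"
  by (rule phi_omega_seq[where e = H])
    (simp_all add: omega_part_H[OF cvs_R] omega_part_H[OF cvs_S] cvs_R cvs_S poly_seq_omega_H)

lemma phi_omega_L:
  "F \<in> tcar sR VR \<Longrightarrow>
    \<phi> (tmult sR (\<lambda>p. snd p - eps * of_int k * fst p + of_int k * eta) (tshift 0 (of_int k) F))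
      = tmult sS (\<lambda>p. snd p - eps * of_int k * fst p + of_int k * eta1) (tshift 0 (of_int k) (\<phi> F))"
  by (rule phi_omega_seq[where e = L])
    (simp_all add: omega_part_L[OF cvs_R] omega_part_L[OF cvs_S] cvs_R cvs_S poly_seq_omega_L)

lemma phi_omega_sigma_gen:
  "F \<in> tcar sR VR \<Longrightarrow> \<phi> (tsmul sR sig (tshift eps (of_int k) F)) = tsmul sS sig1 (tshift eps (of_int k) (\<phi> F))"
  by (rule phi_omega_seq[where e = "sigma_gen eps"])
    (simp add: sigma_gen_def, simp_all add: omega_part_sigma_gen[OF cvs_R] omega_part_sigma_gen[OF cvs_S]
      cvs_R cvs_S poly_seq_omega_sigma_gen)

lemma phi_tmult_fst: "F \<in> tcar sR VR \<Longrightarrow> \<phi> (tmult sR fst F) = tmult sS fst (\<phi> F)"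
  using phi_omega_H[of F 0] by (simp add: tshift_zero)

lemma phi_tmult_snd: "F \<in> tcar sR VR \<Longrightarrow> \<phi> (tmult sR snd F) = tmult sS snd (\<phi> F)"
  using phi_omega_L[of F 0] by (simp add: tshift_zero)

lemma phi_tmult: "poly_fun P \<Longrightarrow> F \<in> tcar sR VR \<Longrightarrow> \<phi> (tmult sR P F) = tmult sS P (\<phi> F)"
proof (induction arbitrary: F rule: poly_fun.induct)
  case (poly_fun_const c)
  then show ?case using cvs_linearD(3)[OF linear] by (simp add: tmult_def tsmul_def)
next
  case (poly_fun_add P Q)
  have FR: "F p \<in> VR" "\<phi> F p \<in> VS" for p
    using tcar_mem[OF cvs_R poly_fun_add.prems] tcar_mem[OF cvs_S phi_mem[OF poly_fun_add.prems]] by blast+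
  have "tmult sR (\<lambda>p. P p + Q p) F = tmult sR P F + tmult sR Q F"
    "tmult sS (\<lambda>p. P p + Q p) (\<phi> F) = tmult sS P (\<phi> F) + tmult sS Q (\<phi> F)"
    by (simp_all add: tmult_def fun_eq_iff cvsD(5)[OF cvs_R FR(1)] cvsD(5)[OF cvs_S FR(2)])
  then show ?case
    using poly_fun_add cvs_linearD(2)[OF linear tcar_tmult[OF cvs_R poly_fun_add(1,5)]
        tcar_tmult[OF cvs_R poly_fun_add(2,5)]] by (simp only:)
next
  case (poly_fun_diff P Q)
  have FR: "F p \<in> VR" "\<phi> F p \<in> VS" for p
    using tcar_mem[OF cvs_R poly_fun_diff.prems] tcar_mem[OF cvs_S phi_mem[OF poly_fun_diff.prems]] by blast+
  have "tmult sR (\<lambda>p. P p - Q p) F = tmult sR P F - tmult sR Q F"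
    "tmult sS (\<lambda>p. P p - Q p) (\<phi> F) = tmult sS P (\<phi> F) - tmult sS Q (\<phi> F)"
    by (simp_all add: tmult_def fun_eq_iff cvs_scale_diff_left[OF cvs_R FR(1)] cvs_scale_diff_left[OF cvs_S FR(2)])
  then show ?case
    using poly_fun_diff cvs_linear_diff[OF cvs_tcar_R cvs_tcar_S linear tcar_tmult[OF cvs_R poly_fun_diff(1,5)]
        tcar_tmult[OF cvs_R poly_fun_diff(2,5)]] by (simp only:)
next
  case (poly_fun_mult P Q)
  have FR: "F p \<in> VR" "\<phi> F p \<in> VS" for p
    using tcar_mem[OF cvs_R poly_fun_mult.prems] tcar_mem[OF cvs_S phi_mem[OF poly_fun_mult.prems]] by blast+
  have "tmult sR (\<lambda>p. P p * Q p) F = tmult sR P (tmult sR Q F)"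
    "tmult sS (\<lambda>p. P p * Q p) (\<phi> F) = tmult sS P (tmult sS Q (\<phi> F))"
    by (simp_all add: tmult_def fun_eq_iff cvsD(6)[OF cvs_R FR(1)] cvsD(6)[OF cvs_S FR(2)])
  then show ?case
    using poly_fun_mult tcar_tmult[OF cvs_R poly_fun_mult(2,5)] by (simp only:)
qed (simp_all add: phi_tmult_fst phi_tmult_snd)

text \<open>Compare the actions of \<open>H\<^sub>1\<close> and \<open>L\<^sub>1\<close> on a preimage of a nonzero constant, at the point \<open>(1, 0)\<close>.\<close>
lemma eta_eq: "eta = eta1"
proof -
  obtain v where v: "v \<in> VR" and C: "(\<lambda>_. v) \<in> tcar sR VR" and "\<phi> (\<lambda>_. v) \<noteq> 0"
    using nonzero_constE by blast
  then obtain p where "\<phi> (\<lambda>_. v) p \<noteq> 0" by (metis ext zero_fun_apply)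
  define u where "u = \<phi> (\<lambda>_. v) p"
  have u: "u \<in> VS" "u \<noteq> 0"
    unfolding u_def using tcar_mem[OF cvs_S phi_mem[OF C]] \<open>\<phi> (\<lambda>_. v) p \<noteq> 0\<close> by blast+
  obtain F where F: "F \<in> tcar sR VR" "\<phi> F = (\<lambda>_. u)"
    using phi_surj[OF tcar_const[OF cvs_S u(1)]] by blast
  define T where "T = tshift 0 1 F"
  have T: "T \<in> tcar sR VR" unfolding T_def by (rule tcar_tshift[OF cvs_R F(1)])
  have "tmult sS fst (\<phi> T) = tmult sS fst (\<lambda>_. u)"
    using phi_omega_H[OF F(1), of 1] phi_tmult_fst[OF T] F(2) by (simp add: T_def tshift_const)
  from fun_cong[OF this, of "(1, 0)"] have T10: "\<phi> T (1, 0) = u"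
    using cvsD(7)[OF cvs_S tcar_mem[OF cvs_S phi_mem[OF T]]] cvsD(7)[OF cvs_S u(1)] by (simp add: tmult_def)
  have "poly_fun (\<lambda>p. snd p - eps * fst p + eta)" by (intro poly_fun.intros)
  then have "tmult sS (\<lambda>p. snd p - eps * fst p + eta) (\<phi> T) = tmult sS (\<lambda>p. snd p - eps * fst p + eta1) (\<lambda>_. u)"
    using phi_omega_L[OF F(1), of 1] phi_tmult[OF _ T] F(2) by (simp add: T_def tshift_const)
  from fun_cong[OF this, of "(1, 0)"] have "sS (eta - eps) u = sS (eta1 - eps) u"
    using T10 by (simp add: tmult_def)
  then have "eta - eps = eta1 - eps" using cvs_scale_left_cancel[OF cvs_S u(1)] u(2) by blast
  then show ?thesis by simp
qed

text \<open>The action of \<open>I\<^sub>0\<close> (resp. \<open>J\<^sub>0\<close>) on the image \<open>G\<close> of a constant gives \<open>\<sigma> G = \<sigma>\<^sub>1 G(x - \<epsilon>, y)\<close>,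
  so translating \<open>G\<close> by \<open>k\<epsilon>\<close> multiplies it by \<open>(\<sigma>/\<sigma>\<^sub>1)\<^sup>k\<close>, yet translates of \<open>G\<close> depend polynomially on \<open>k\<close>.\<close>
lemma sig_eq: "sig = sig1"
proof -
  obtain v where C: "(\<lambda>_. v) \<in> tcar sR VR" and nz: "\<phi> (\<lambda>_. v) \<noteq> 0"
    using nonzero_constE by blast
  define G where "G = \<phi> (\<lambda>_. v)"
  define c where "c = sig / sig1"
  have G: "G \<in> tcar sS VS" unfolding G_def by (rule phi_mem[OF C])
  have "tsmul sS sig1 (tshift eps 0 G) = tsmul sS sig G"
    using phi_omega_sigma_gen[OF C, of 0] cvs_linearD(3)[OF linear C, of sig] by (simp add: G_def tshift_const)
  then have step: "tshift eps 0 G = tsmul sS c G"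
    unfolding c_def by (rule cvs_scale_solve[OF cvs_tcar_S tcar_tshift[OF cvs_S G] G nonzero(4)])
  have pow: "tshift (of_nat n * eps) 0 G = tsmul sS (c ^ n) G" for n
  proof (induction n)
    case 0
    then show ?case using cvsD(7)[OF cvs_tcar_S G] by (simp add: tshift_zero)
  next
    case (Suc n)
    have "tshift (of_nat (Suc n) * eps) 0 G = tshift eps 0 (tshift (of_nat n * eps) 0 G)"
      by (simp add: tshift_tshift algebra_simps)
    also have "\<dots> = tsmul sS (c ^ n) (tsmul sS c G)" by (simp add: Suc.IH tshift_tsmul step)
    finally show ?case using cvsD(6)[OF cvs_tcar_S G] by (simp add: mult.commute)
  qed
  have "c = 1"
  proof (rule poly_seq_eventually_geometric[OF cvs_tcar_S poly_seq_tshift[OF cvs_S G] G])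
    show "G \<noteq> 0" "c \<noteq> 0" using nz nonzero(3,4) unfolding G_def c_def by simp_all
    show "tshift (0 + of_int k * eps) (0 + of_int k * 0) G = tsmul sS (c powi k) G" if "k > 0" for k
      using pow[of "nat k"] that by (simp add: power_int_def)
  qed
  then show ?thesis using nonzero(4) unfolding c_def by simp
qed

lemma phi_omega_part:
  assumes F: "F \<in> tcar sR VR"
  shows "\<phi> (omega_part sR lam eta sig eps e F) = omega_part sS lam1 eta1 sig1 eps e (\<phi> F)"
proof -
  have shift: "tshift a b F \<in> tcar sR VR" for a b by (rule tcar_tshift[OF cvs_R F])
  have pf: "poly_fun (\<lambda>p. snd p - eps * of_int k * fst p + of_int k * eta)" for k
    by (intro poly_fun.intros)
  note eqs = lam_eq[symmetric] eta_eq[symmetric] sig_eq[symmetric]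
  show ?thesis
  proof (cases rule: gbasis_omega_cases[where e = e and eps = eps])
    case (H k)
    then show ?thesis
      by (simp add: omega_part_H[OF cvs_R F] omega_part_H[OF cvs_S phi_mem[OF F]] lam_eq phi_omega_H[OF F]
          cvs_linearD(3)[OF linear tcar_tmult[OF cvs_R poly_fun_fst shift]])
  next
    case (L k)
    then show ?thesis
      by (simp add: omega_part_L[OF cvs_R F] omega_part_L[OF cvs_S phi_mem[OF F]] eqs phi_omega_L[OF F, unfolded eqs]
          cvs_linearD(3)[OF linear tcar_tmult[OF cvs_R pf shift]])
  next
    case (sigma k)
    then show ?thesis
      by (simp add: omega_part_sigma_gen[OF cvs_R F] omega_part_sigma_gen[OF cvs_S phi_mem[OF F]] eqs
          phi_omega_sigma_gen[OF F, unfolded eqs] cvs_linearD(3)[OF linear tcar_scale[OF cvs_R shift]])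
  qed (simp add: omega_part_other[OF eps] phi_zero)
qed

lemma phi_rho:
  assumes F: "F \<in> tcar sR VR"
  shows "\<phi> (\<lambda>p. \<rho>R e (F p)) = (\<lambda>p. \<rho>S e (\<phi> F p))"
proof -
  have "\<phi> (omega_part sR lam eta sig eps e F) + \<phi> (\<lambda>p. \<rho>R e (F p))
      = \<phi> (omega_tensor sR \<rho>R lam eta sig eps e F)"
    unfolding omega_tensor_def
    by (rule cvs_linearD(2)[OF linear tcar_omega_part[OF cvs_R F eps]
          tcar_pointwise[OF cvs_R cvs_R gmodD(2)[OF gmod_R] F], symmetric])
  also have "\<dots> = \<phi> (omega_part sR lam eta sig eps e F) + (\<lambda>p. \<rho>S e (\<phi> F p))"
    using intertwines[OF F, of e] by (simp add: omega_tensor_def phi_omega_part[OF F])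
  finally show ?thesis by simp
qed

text \<open>\<open>\<phi>\<close> commutes with multiplication by \<open>X\<close> and \<open>Y\<close>, so it induces a map
  \<open>(\<Omega> \<otimes> R) / (X, Y) = R \<rightarrow> S = (\<Omega> \<otimes> S) / (X, Y)\<close>, which is \<open>phi_origin\<close>.\<close>
definition phi_origin :: "'v \<Rightarrow> 'w" where
  "phi_origin v = \<phi> (\<lambda>_. v) (0, 0)"

lemma cvs_linear_phi_origin: "cvs_linear sR VR sS VS phi_origin"
proof -
  have "cvs_linear sR VR sS VS ((\<lambda>G. G (0, 0)) \<circ> (\<phi> \<circ> (\<lambda>v _. v)))"
    by (rule cvs_linear_comp[OF cvs_linear_comp[OF cvs_linear_const[OF cvs_R] linear] cvs_linear_eval[OF cvs_S]])
  moreover have "phi_origin = (\<lambda>G. G (0, 0)) \<circ> (\<phi> \<circ> (\<lambda>v _. v))"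
    by (simp add: fun_eq_iff phi_origin_def)
  ultimately show ?thesis by simp
qed

lemma phi_origin_rho: "v \<in> VR \<Longrightarrow> phi_origin (\<rho>R e v) = \<rho>S e (phi_origin v)"
  using phi_rho[OF tcar_const[OF cvs_R], of v e] by (simp add: phi_origin_def)

lemma phi_at_origin: "F \<in> tcar sR VR \<Longrightarrow> \<phi> F (0, 0) = phi_origin (F (0, 0))"
proof -
  assume F: "F \<in> tcar sR VR"
  obtain A B where AB: "A \<in> tcar sR VR" "B \<in> tcar sR VR"
    and decomp: "F = (\<lambda>_. F (0, 0)) + tmult sR fst A + tmult sR snd B"
    using tcar_decompose[OF cvs_R F] by blast
  have mem: "(\<lambda>_. F (0, 0)) \<in> tcar sR VR" "tmult sR fst A \<in> tcar sR VR" "tmult sR snd B \<in> tcar sR VR"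
    using tcar_const[OF cvs_R tcar_mem[OF cvs_R F]] tcar_tmult[OF cvs_R poly_fun_fst AB(1)]
      tcar_tmult[OF cvs_R poly_fun_snd AB(2)] by blast+
  have "\<phi> F = \<phi> (\<lambda>_. F (0, 0)) + tmult sS fst (\<phi> A) + tmult sS snd (\<phi> B)"
    by (subst decomp) (simp add: cvs_linearD(2)[OF linear] tcar_add[OF cvs_R] mem phi_tmult_fst phi_tmult_snd AB)
  then show ?thesis
    using cvs_scale_zero_left[OF cvs_S tcar_mem[OF cvs_S phi_mem]] AB
    by (simp add: phi_origin_def tmult_def)
qed

lemma phi_origin_eq_zero:
  assumes v: "v \<in> VR" "phi_origin v = 0"
  shows "v = 0"
proof -
  have C: "(\<lambda>_. v) \<in> tcar sR VR" by (rule tcar_const[OF cvs_R v(1)])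
  obtain A B where AB: "A \<in> tcar sS VS" "B \<in> tcar sS VS"
    and decomp: "\<phi> (\<lambda>_. v) = (\<lambda>_. \<phi> (\<lambda>_. v) (0, 0)) + tmult sS fst A + tmult sS snd B"
    using tcar_decompose[OF cvs_S phi_mem[OF C]] by blast
  obtain A' B' where A': "A' \<in> tcar sR VR" "\<phi> A' = A" and B': "B' \<in> tcar sR VR" "\<phi> B' = B"
    using phi_surj AB by metis
  define T where "T = tmult sR fst A' + tmult sR snd B'"
  have T: "T \<in> tcar sR VR"
    unfolding T_def by (intro tcar_add[OF cvs_R] tcar_tmult[OF cvs_R] poly_fun_fst poly_fun_snd A'(1) B'(1))
  have "\<phi> T = \<phi> (\<lambda>_. v)"
    using decomp v(2) A' B' unfolding T_def phi_origin_def
    by (simp add: cvs_linearD(2)[OF linear] tcar_tmult[OF cvs_R] poly_fun_fst poly_fun_snd phi_tmult_fst phi_tmult_snd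
        flip: zero_fun_def)
  then have "T = (\<lambda>_. v)"
    using bij_betw_imp_inj_on[OF bij] T C by (metis inj_onD)
  then have "v = T (0, 0)" by simp
  also have "\<dots> = 0"
    unfolding T_def using cvs_scale_zero_left[OF cvs_R tcar_mem[OF cvs_R]] A'(1) B'(1) by (simp add: tmult_def)
  finally show ?thesis .
qed

lemma phi_origin_image: "phi_origin ` VR = VS"
proof
  show "phi_origin ` VR \<subseteq> VS" using cvs_linearD(1)[OF cvs_linear_phi_origin] by blast
next
  show "VS \<subseteq> phi_origin ` VR"
  proof
    fix u assume "u \<in> VS"
    then obtain F where F: "F \<in> tcar sR VR" "\<phi> F = (\<lambda>_. u)"
      using phi_surj[OF tcar_const[OF cvs_S]] by blast
    then have "u = phi_origin (F (0, 0))" using phi_at_origin[OF F(1)] by simp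
    then show "u \<in> phi_origin ` VR" using tcar_mem[OF cvs_R F(1)] by blast
  qed
qed

lemma gmod_iso_restrict: "gmod_iso sR VR \<rho>R sS VS \<rho>S"
  unfolding gmod_iso_iff bij_betw_def
  using cvs_linear_phi_origin phi_origin_rho phi_origin_image
    cvs_linear_inj_on[OF cvs_R cvs_S cvs_linear_phi_origin phi_origin_eq_zero]
  by blast

end

lemma gmod_iso_omega_tensor_imp:
  assumes "eps = 1 \<or> eps = - 1" "lam \<noteq> 0" "lam1 \<noteq> 0" "sig \<noteq> 0" "sig1 \<noteq> 0"
    and "gmod sR VR \<rho>R" "restricted_gmod VR \<rho>R" "VR \<noteq> {0}"
    and "gmod sS VS \<rho>S" "restricted_gmod VS \<rho>S"
    and "gmod_iso (tsmul sR) (tcar sR VR) (omega_tensor sR \<rho>R lam eta sig eps)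
                  (tsmul sS) (tcar sS VS) (omega_tensor sS \<rho>S lam1 eta1 sig1 eps)"
  shows "lam = lam1 \<and> eta = eta1 \<and> sig = sig1 \<and> gmod_iso sR VR \<rho>R sS VS \<rho>S"
proof -
  obtain \<phi> where "bij_betw \<phi> (tcar sR VR) (tcar sS VS)"
    "cvs_linear (tsmul sR) (tcar sR VR) (tsmul sS) (tcar sS VS) \<phi>"
    "\<forall>e. \<forall>F\<in>tcar sR VR. \<phi> (omega_tensor sR \<rho>R lam eta sig eps e F) = omega_tensor sS \<rho>S lam1 eta1 sig1 eps e (\<phi> F)"
    using assms(11) unfolding gmod_iso_iff by blast
  then interpret omega_tensor_iso sR VR \<rho>R lam eta sig eps sS VS \<rho>S lam1 eta1 sig1 \<phi>
    using assms by unfold_locales auto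
  show ?thesis using lam_eq eta_eq sig_eq gmod_iso_restrict by blast
qed

lemma gmod_iso_omega_tensor:
  assumes gR: "gmod sR VR \<rho>R" and gS: "gmod sS VS \<rho>S" and iso: "gmod_iso sR VR \<rho>R sS VS \<rho>S"
  shows "gmod_iso (tsmul sR) (tcar sR VR) (omega_tensor sR \<rho>R lam eta sig eps)
                  (tsmul sS) (tcar sS VS) (omega_tensor sS \<rho>S lam eta sig eps)"
proof -
  have cR: "cvs sR VR" and cS: "cvs sS VS" using gmodD(1) gR gS by blast+
  obtain \<psi> where \<psi>: "bij_betw \<psi> VR VS" "cvs_linear sR VR sS VS \<psi>" "\<forall>e. \<forall>x\<in>VR. \<psi> (\<rho>R e x) = \<rho>S e (\<psi> x)"
    using iso unfolding gmod_iso_iff by blast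
  have \<psi>': "cvs_linear sS VS sR VR (inv_into VR \<psi>)" by (rule cvs_linear_inv_into[OF cR \<psi>(1,2)])
  define \<phi> where "\<phi> F = (\<lambda>p. \<psi> (F p))" for F :: "complex \<times> complex \<Rightarrow> _"
  have lin: "cvs_linear (tsmul sR) (tcar sR VR) (tsmul sS) (tcar sS VS) \<phi>"
    unfolding \<phi>_def[abs_def] by (rule cvs_linear_pointwise[OF cR cS \<psi>(2)])
  have "bij_betw \<phi> (tcar sR VR) (tcar sS VS)"
  proof (rule bij_betw_byWitness[where f' = "\<lambda>G p. inv_into VR \<psi> (G p)"])
    show "\<forall>F\<in>tcar sR VR. (\<lambda>p. inv_into VR \<psi> (\<phi> F p)) = F"
      using tcar_mem[OF cR] bij_betw_imp_inj_on[OF \<psi>(1)] by (simp add: \<phi>_def fun_eq_iff)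
    show "\<forall>G\<in>tcar sS VS. \<phi> (\<lambda>p. inv_into VR \<psi> (G p)) = G"
      using tcar_mem[OF cS] bij_betw_imp_surj_on[OF \<psi>(1)] by (simp add: \<phi>_def fun_eq_iff f_inv_into_f)
    show "\<phi> ` tcar sR VR \<subseteq> tcar sS VS" using cvs_linearD(1)[OF lin] by blast
    show "(\<lambda>G p. inv_into VR \<psi> (G p)) ` tcar sS VS \<subseteq> tcar sR VR"
      using tcar_pointwise[OF cS cR \<psi>'] by blast
  qed
  moreover have "\<phi> (omega_tensor sR \<rho>R lam eta sig eps e F) = omega_tensor sS \<rho>S lam eta sig eps e (\<phi> F)"
    if F: "F \<in> tcar sR VR" for e F
  proof
    fix p
    have FV: "\<And>p. F p \<in> VR" using tcar_mem[OF cR F] .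
    have "omega_part sR lam eta sig eps e F p \<in> VR" "\<rho>R e (F p) \<in> VR"
      using omega_part_mem[where F = F, OF cR FV] cvs_linearD(1)[OF gmodD(2)[OF gR] FV] by blast+
    then show "\<phi> (omega_tensor sR \<rho>R lam eta sig eps e F) p = omega_tensor sS \<rho>S lam eta sig eps e (\<phi> F) p"
      using cvs_linearD(2)[OF \<psi>(2)] omega_part_pointwise[where F = F, OF cR \<psi>(2) FV] \<psi>(3) FV
      by (simp add: \<phi>_def omega_tensor_def)
  qed
  ultimately show ?thesis unfolding gmod_iso_iff using lin by blast
qed

lemma not_gmod_iso_omegaA_omegaB:
  assumes "lam1 \<noteq> 0" "sig1 \<noteq> 0"
    and "gmod sR VR \<rho>R" "restricted_gmod VR \<rho>R" "VR \<noteq> {0}"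
    and "gmod sS VS \<rho>S" "restricted_gmod VS \<rho>S"
  shows "\<not> gmod_iso (tsmul sR) (tcar sR VR) (omega_tensor sR \<rho>R lam eta sig 1)
                    (tsmul sS) (tcar sS VS) (omega_tensor sS \<rho>S lam1 eta1 sig1 (- 1))"
proof
  assume "gmod_iso (tsmul sR) (tcar sR VR) (omega_tensor sR \<rho>R lam eta sig 1)
                   (tsmul sS) (tcar sS VS) (omega_tensor sS \<rho>S lam1 eta1 sig1 (- 1))"
  then obtain \<phi> where bij: "bij_betw \<phi> (tcar sR VR) (tcar sS VS)"
    and hom: "cvs_linear (tsmul sR) (tcar sR VR) (tsmul sS) (tcar sS VS) \<phi>"
      "\<forall>e. \<forall>F\<in>tcar sR VR. \<phi> (omega_tensor sR \<rho>R lam eta sig 1 e F) = omega_tensor sS \<rho>S lam1 eta1 sig1 (- 1) e (\<phi> F)"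
    unfolding gmod_iso_iff by blast
  interpret omega_tensor_hom sR VR \<rho>R lam eta sig 1 sS VS \<rho>S lam1 eta1 sig1 "- 1" \<phi>
    using assms hom by unfold_locales auto
  obtain v where v: "v \<in> VR" "v \<noteq> 0" using assms(5) cvsD(1)[OF cvs_R] by blast
  have C: "(\<lambda>_. v) \<in> tcar sR VR" by (rule tcar_const[OF cvs_R v(1)])
  have "\<phi> (\<lambda>_. v) = \<phi> 0" using phi_const_eq_zero[OF refl refl assms(1,2) v(1)] phi_zero by simp
  then have "(\<lambda>_::complex \<times> complex. v) = 0" by (rule inj_onD[OF bij_betw_imp_inj_on[OF bij] _ C tcar_zero])
  then show False using v(2) by (metis zero_fun_apply)
qed

theorem theorem4p3:
  fixes sR :: "complex \<Rightarrow> 'v::ab_group_add \<Rightarrow> 'v" and VR :: "'v set" and \<rho>R :: "gbasis \<Rightarrow> 'v \<Rightarrow> 'v"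
    and sS :: "complex \<Rightarrow> 'w::ab_group_add \<Rightarrow> 'w" and VS :: "'w set" and \<rho>S :: "gbasis \<Rightarrow> 'w \<Rightarrow> 'w"
    and lam lam1 sig sig1 eta eta1 :: complex
  assumes "lam \<noteq> 0" "lam1 \<noteq> 0" "sig \<noteq> 0" "sig1 \<noteq> 0"
    and "irreducible_gmod sR VR \<rho>R" "restricted_gmod VR \<rho>R"
    and "irreducible_gmod sS VS \<rho>S" "restricted_gmod VS \<rho>S"
  shows "(gmod_iso (tsmul sR) (tcar sR VR) (omegaA_tensor sR \<rho>R lam eta sig)
                  (tsmul sS) (tcar sS VS) (omegaA_tensor sS \<rho>S lam1 eta1 sig1)
           \<longleftrightarrow> lam = lam1 \<and> eta = eta1 \<and> sig = sig1 \<and> gmod_iso sR VR \<rho>R sS VS \<rho>S)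
    \<and> (gmod_iso (tsmul sR) (tcar sR VR) (omegaB_tensor sR \<rho>R lam eta sig)
                  (tsmul sS) (tcar sS VS) (omegaB_tensor sS \<rho>S lam1 eta1 sig1)
           \<longleftrightarrow> lam = lam1 \<and> eta = eta1 \<and> sig = sig1 \<and> gmod_iso sR VR \<rho>R sS VS \<rho>S)
    \<and> \<not> gmod_iso (tsmul sR) (tcar sR VR) (omegaA_tensor sR \<rho>R lam eta sig)
                    (tsmul sS) (tcar sS VS) (omegaB_tensor sS \<rho>S lam1 eta1 sig1)"
proof -
  have R: "gmod sR VR \<rho>R" "VR \<noteq> {0}" and S: "gmod sS VS \<rho>S"
    using assms(5,7) unfolding irreducible_gmod_def by blast+
  have "gmod_iso (tsmul sR) (tcar sR VR) (omega_tensor sR \<rho>R lam eta sig eps)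
                 (tsmul sS) (tcar sS VS) (omega_tensor sS \<rho>S lam1 eta1 sig1 eps)
        \<longleftrightarrow> lam = lam1 \<and> eta = eta1 \<and> sig = sig1 \<and> gmod_iso sR VR \<rho>R sS VS \<rho>S"
    if "eps = 1 \<or> eps = - 1" for eps
    using gmod_iso_omega_tensor_imp[OF that assms(1-4) R(1) assms(6) R(2) S assms(8)]
      gmod_iso_omega_tensor[OF R(1) S] by blast
  then show ?thesis
    unfolding omegaA_tensor_eq omegaB_tensor_eq
    using not_gmod_iso_omegaA_omegaB[OF assms(2,4) R(1) assms(6) R(2) S assms(8)] by simp
qed

end
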